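(* Let $g\in\mathcal M_K$ be given by $g=\beta Q|_{\mathfrak p}+\alpha_1Q|_{\mathfrak k_1}+\cdots+\alpha_{r+s}Q|_{\mathfrak k_{r+s}}$ with $\beta,\alpha_1,\dots,\alpha_{r+s}>0$. Then the scalar curvature of $g$ is $$S(g)=-\frac14\sum_{i=1}^{r+s}\frac{\alpha_i}{\beta^2}d_i(1-\kappa_i)-\frac{n}{2\beta}+\frac14\sum_{i=1}^{r}\frac{d_i\kappa_i}{\alpha_i}.$$
   Context: Let $G$ be a connected non-compact simple Lie group with Lie algebra $\mathfrak g$, $K$ a maximal compact subgroup with Lie algebra $\mathfrak k$, $B$ the Killing form of $\mathfrak g$, and $\mathfrak p$ the $B$-orthogonal complement of $\mathfrak k$ in $\mathfrak g$. Let $Q=B|_{\mathfrak p}-B|_{\mathfrak k}$. Write $\mathfrak k=\mathfrak k_1\oplus\cdots\oplus\mathfrak k_{r+s}$, where $\mathfrak k_1,\dots,\mathfrak k_r$ are the simple ideals of $[\mathfrak k,\mathfrak k]$, $\mathfrak k_{r+1}$ is the centre of $\mathfrak k$, and $s=1$ if the centre is nontrivial, $s=0$ otherwise. Let $n=\dim\mathfrak p$, $d_i=\dim\mathfrak k_i$, and define $\kappa_i$ by $B_i=\kappa_iB|_{\mathfrak k_i}$, $B_i$ the Killing form of $\mathfrak k_i$. Left-invariant tensor fields on $G$ are identified with bilinear forms on $\mathfrak g$; $Q|_{\mathfrak u}$ denotes $Q$ restricted to $\mathfrak u$ and extended by zero on its $Q$-orthogonal complement. $\mathcal M_K$ is the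 set of left-invariant metrics on $G$ naturally reductive with respect to $G\times K$ (acting by $(x,k)y=xyk^{-1}$), which by a theorem of Gordon are exactly the metrics $\beta Q|_{\mathfrak p}+\sum_i\alpha_iQ|_{\mathfrak k_i}$ with all coefficients positive. $S$ denotes scalar curvature. *)

theory Defs
  imports "HOL-Analysis.Analysis"
begin

text \<open>A real Lie algebra is modelled on a finite-dimensional real vector space
  (type of class euclidean_space; its inner product plays no role) with a bracket br.\<close>

definition lie_bracket :: "('a::euclidean_space \<Rightarrow> 'a \<Rightarrow> 'a) \<Rightarrow> bool" where
  "lie_bracket br \<longleftrightarrow> bilinear br \<and> (\<forall>x y. br x y = - br y x)
     \<and> (\<forall>x y z. br x (br y z) + br y (br z x) + br z (br x y) = 0)"

definition trace_lin :: "('a::euclidean_space \<Rightarrow> 'a) \<Rightarrow> real" where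
  "trace_lin f = (\<Sum>b\<in>Basis. inner (f b) b)"

definition trace_on :: "'a::euclidean_space set \<Rightarrow> ('a \<Rightarrow> 'a) \<Rightarrow> real" where
  "trace_on V f = (SOME t. \<exists>E. finite E \<and> independent E \<and> span E = V \<and>
       t = (\<Sum>e\<in>E. representation E (f e) e))"

definition killing :: "('a::euclidean_space \<Rightarrow> 'a \<Rightarrow> 'a) \<Rightarrow> 'a \<Rightarrow> 'a \<Rightarrow> real" where
  "killing br x y = trace_lin (\<lambda>z. br x (br y z))"

definition killing_on :: "('a::euclidean_space \<Rightarrow> 'a \<Rightarrow> 'a) \<Rightarrow> 'a set \<Rightarrow> 'a \<Rightarrow> 'a \<Rightarrow> real" where
  "killing_on br V x y = trace_on V (\<lambda>z. br x (br y z))"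

definition ideal_of :: "('a::euclidean_space \<Rightarrow> 'a \<Rightarrow> 'a) \<Rightarrow> 'a set \<Rightarrow> 'a set \<Rightarrow> bool" where
  "ideal_of br A I \<longleftrightarrow> subspace I \<and> I \<subseteq> A \<and> (\<forall>x\<in>A. \<forall>y\<in>I. br x y \<in> I)"

definition simple_sub :: "('a::euclidean_space \<Rightarrow> 'a \<Rightarrow> 'a) \<Rightarrow> 'a set \<Rightarrow> bool" where
  "simple_sub br A \<longleftrightarrow> (\<exists>x\<in>A. \<exists>y\<in>A. br x y \<noteq> 0) \<and>
      (\<forall>I. ideal_of br A I \<longrightarrow> I = {0} \<or> I = A)"

definition derived :: "('a::euclidean_space \<Rightarrow> 'a \<Rightarrow> 'a) \<Rightarrow> 'a set \<Rightarrow> 'a set" where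
  "derived br A = span {br x y | x y. x \<in> A \<and> y \<in> A}"

definition centre :: "('a::euclidean_space \<Rightarrow> 'a \<Rightarrow> 'a) \<Rightarrow> 'a set \<Rightarrow> 'a set" where
  "centre br A = {x \<in> A. \<forall>y\<in>A. br x y = 0}"

definition perp_k :: "('a::euclidean_space \<Rightarrow> 'a \<Rightarrow> 'a) \<Rightarrow> 'a set \<Rightarrow> 'a set" where
  "perp_k br k = {x. \<forall>y\<in>k. killing br x y = 0}"

text \<open>k is the Lie algebra of a maximal compact subgroup, i.e. g = k + p is a Cartan decomposition,
  p the B-orthogonal complement of k.\<close>
definition cartan_k :: "('a::euclidean_space \<Rightarrow> 'a \<Rightarrow> 'a) \<Rightarrow> 'a set \<Rightarrow> bool" where
  "cartan_k br k \<longleftrightarrow> subspace k \<and>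
     (\<forall>x\<in>k. \<forall>y\<in>k. br x y \<in> k) \<and>
     (\<forall>x\<in>k. \<forall>y\<in>perp_k br k. br x y \<in> perp_k br k) \<and>
     (\<forall>x\<in>perp_k br k. \<forall>y\<in>perp_k br k. br x y \<in> k) \<and>
     (\<forall>x\<in>k. x \<noteq> 0 \<longrightarrow> killing br x x < 0) \<and>
     (\<forall>x\<in>perp_k br k. x \<noteq> 0 \<longrightarrow> killing br x x > 0) \<and>
     (\<forall>x. \<exists>u\<in>k. \<exists>v\<in>perp_k br k. x = u + v)"

definition fproj :: "('a::euclidean_space \<Rightarrow> 'a \<Rightarrow> real) \<Rightarrow> 'a set \<Rightarrow> 'a \<Rightarrow> 'a" where
  "fproj F U x = (THE u. u \<in> U \<and> (\<forall>w\<in>U. F (x - u) w = 0))"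

text \<open>Q = B|_p - B|_k.\<close>
definition Qform :: "('a::euclidean_space \<Rightarrow> 'a \<Rightarrow> 'a) \<Rightarrow> 'a set \<Rightarrow> 'a \<Rightarrow> 'a \<Rightarrow> real" where
  "Qform br k x y =
     killing br (x - fproj (killing br) k x) (y - fproj (killing br) k y)
     - killing br (fproj (killing br) k x) (fproj (killing br) k y)"

text \<open>F|_U: F restricted to U and extended by zero on the F-orthogonal complement.\<close>
definition restr_form :: "('a::euclidean_space \<Rightarrow> 'a \<Rightarrow> real) \<Rightarrow> 'a set \<Rightarrow> 'a \<Rightarrow> 'a \<Rightarrow> real" where
  "restr_form F U x y = F (fproj F U x) (fproj F U y)"

text \<open>Scalar curvature of the left-invariant metric with inner product gm on the Lie algebra,
  via the Levi-Civita connection on left-invariant fields (Koszul formula)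
  computed in a gm-orthonormal basis.\<close>
definition orthonormal_basis_for :: "('a::euclidean_space \<Rightarrow> 'a \<Rightarrow> real) \<Rightarrow> 'a set \<Rightarrow> bool" where
  "orthonormal_basis_for gm E \<longleftrightarrow> finite E \<and> card E = DIM('a) \<and>
     (\<forall>a\<in>E. \<forall>b\<in>E. gm a b = (if a = b then 1 else 0))"

definition levi_civita ::
  "('a::euclidean_space \<Rightarrow> 'a \<Rightarrow> real) \<Rightarrow> ('a \<Rightarrow> 'a \<Rightarrow> 'a) \<Rightarrow> 'a set \<Rightarrow> 'a \<Rightarrow> 'a \<Rightarrow> 'a" where
  "levi_civita gm br E X Y =
     (\<Sum>e\<in>E. ((gm (br X Y) e - gm (br Y e) X + gm (br e X) Y) / 2) *\<^sub>R e)"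

definition curvature ::
  "('a::euclidean_space \<Rightarrow> 'a \<Rightarrow> real) \<Rightarrow> ('a \<Rightarrow> 'a \<Rightarrow> 'a) \<Rightarrow> 'a set \<Rightarrow> 'a \<Rightarrow> 'a \<Rightarrow> 'a \<Rightarrow> 'a" where
  "curvature gm br E X Y Z =
     levi_civita gm br E X (levi_civita gm br E Y Z) - levi_civita gm br E Y (levi_civita gm br E X Z)
     - levi_civita gm br E (br X Y) Z"

definition scalar_curvature ::
  "('a::euclidean_space \<Rightarrow> 'a \<Rightarrow> real) \<Rightarrow> ('a \<Rightarrow> 'a \<Rightarrow> 'a) \<Rightarrow> real" where
  "scalar_curvature gm br =
     (let E = (SOME E. orthonormal_basis_for gm E)
      in \<Sum>a\<in>E. \<Sum>b\<in>E. gm (curvature gm br E a b b) a)"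

end

theory Submission
  imports Defs
begin

text \<open>
  For a left-invariant metric g on a unimodular Lie group and a g-orthonormal basis e_a of its
  Lie algebra, the Koszul formula gives
    S = -1/4 sum_{a,b} g([e_a,e_b],[e_a,e_b]) - 1/2 sum_a B(e_a,e_a),
  and a simple Lie algebra is perfect, hence unimodular.

  For g in M_K, the blocks p, k_1, ..., k_{r+s} are Q-orthogonal (k is the sum of its simple ideals
  and its centre), so Q-orthonormal bases of the blocks, rescaled by 1/sqrt beta and
  1/sqrt alpha_i, form a g-orthonormal basis. In it the Killing term is n/beta - sum_i d_i/alpha_i.
  The bracket term splits into block sums, using [k_i,k_j] = 0 for i \<noteq> j, [k_i,k_i] \<subseteq> k_i,
  [k,p] \<subseteq> p and [p,p] \<subseteq> k, and each block sum is evaluated by the ad-invariance of B: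
  for x in k_i the trace of (ad x)^2 is B(x,x), its part on k_i is kappa_i B(x,x), so its part on p
  is (1 - kappa_i) B(x,x). The centre acts trivially on k, hence kappa_{r+1} = 0.
\<close>

section \<open>Orthonormal bases and traces\<close>

lemma bilinear_sum_left: "bilinear h \<Longrightarrow> h (\<Sum>i\<in>I. f i) y = (\<Sum>i\<in>I. h (f i) y)"
  unfolding bilinear_def using linear_sum[of "\<lambda>x. h x y"] by blast

lemma bilinear_sum_right: "bilinear h \<Longrightarrow> h y (\<Sum>i\<in>I. f i) = (\<Sum>i\<in>I. h y (f i))"
  unfolding bilinear_def using linear_sum[of "h y"] by blast

definition orthonormal_wrt :: "('a::euclidean_space \<Rightarrow> 'a \<Rightarrow> real) \<Rightarrow> 'a set \<Rightarrow> bool" where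
  "orthonormal_wrt \<phi> E \<longleftrightarrow> (\<forall>a\<in>E. \<forall>b\<in>E. \<phi> a b = (if a = b then 1 else 0))"

definition orthonormal_basis_of :: "('a::euclidean_space \<Rightarrow> 'a \<Rightarrow> real) \<Rightarrow> 'a set \<Rightarrow> 'a set \<Rightarrow> bool" where
  "orthonormal_basis_of \<phi> V E \<longleftrightarrow> finite E \<and> E \<subseteq> V \<and> orthonormal_wrt \<phi> E
     \<and> (\<forall>x\<in>V. x = (\<Sum>e\<in>E. \<phi> x e *\<^sub>R e))"

lemma orthonormal_wrt_coeff:
  assumes "bilinear \<phi>" "orthonormal_wrt \<phi> E" "finite E" "e0 \<in> E"
  shows "\<phi> (\<Sum>e\<in>E. u e *\<^sub>R e) e0 = u e0"
proof -
  have "\<phi> (\<Sum>e\<in>E. u e *\<^sub>R e) e0 = (\<Sum>e\<in>E. u e * \<phi> e e0)"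
    using assms(1) by (simp add: bilinear_sum_left bilinear_lmul)
  also have "\<dots> = (\<Sum>e\<in>E. if e = e0 then u e else 0)"
    using assms(2) unfolding orthonormal_wrt_def by (intro sum.cong) (auto simp: assms(4))
  also have "\<dots> = u e0" using assms(3,4) by simp
  finally show ?thesis .
qed

lemma orthonormal_wrt_independent:
  assumes "bilinear \<phi>" "orthonormal_wrt \<phi> E" "finite E"
  shows "independent E"
proof
  assume "dependent E"
  then obtain u v where "v \<in> E" "u v \<noteq> 0" "(\<Sum>v\<in>E. u v *\<^sub>R v) = 0"
    using dependent_finite[OF assms(3)] by auto
  moreover have "\<phi> (\<Sum>v\<in>E. u v *\<^sub>R v) v = u v"
    using orthonormal_wrt_coeff[OF assms] \<open>v \<in> E\<close> by auto
  ultimately show False using assms(1) by (simp add: bilinear_lzero)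
qed

lemma orthonormal_wrt_expansion:
  assumes "bilinear \<phi>" "orthonormal_wrt \<phi> E" "finite E" "x \<in> span E"
  shows "x = (\<Sum>e\<in>E. \<phi> x e *\<^sub>R e)"
proof -
  obtain u where u: "x = (\<Sum>e\<in>E. u e *\<^sub>R e)"
    using assms(4) span_finite[OF assms(3)] by auto
  have "\<phi> x e = u e" if "e \<in> E" for e
    using orthonormal_wrt_coeff[OF assms(1-3) that] u by simp
  then show ?thesis using u by (auto intro: sum.cong)
qed

lemma orthonormal_wrt_insert_normalized:
  assumes bil: "bilinear \<phi>" and sym: "\<And>x y. \<phi> x y = \<phi> y x"
    and E: "orthonormal_wrt \<phi> E" and w_orth: "\<And>e. e \<in> E \<Longrightarrow> \<phi> w e = 0" and w_pos: "\<phi> w w > 0"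
  shows "orthonormal_wrt \<phi> (insert ((1 / sqrt (\<phi> w w)) *\<^sub>R w) E)"
proof -
  define w' where "w' = (1 / sqrt (\<phi> w w)) *\<^sub>R w"
  have w'_unit: "\<phi> w' w' = 1"
    unfolding w'_def using w_pos by (simp add: bilinear_lmul[OF bil] bilinear_rmul[OF bil])
  have w'_orth: "\<phi> w' e = 0" "\<phi> e w' = 0" if "e \<in> E" for e
    unfolding w'_def using w_orth[OF that] sym[of e w]
    by (simp_all add: bilinear_lmul[OF bil] bilinear_rmul[OF bil])
  have "w' \<notin> E" using w'_unit w'_orth by force
  then show ?thesis using E w'_unit w'_orth unfolding orthonormal_wrt_def w'_def[symmetric] by auto
qed

lemma orthonormal_wrt_extend:
  assumes bil: "bilinear \<phi>" and sym: "\<And>x y. \<phi> x y = \<phi> y x"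
    and pos: "\<And>x. x \<in> V \<Longrightarrow> x \<noteq> 0 \<Longrightarrow> \<phi> x x > 0" and V: "subspace V"
    and E: "finite E" "E \<subseteq> V" "orthonormal_wrt \<phi> E" and a: "a \<in> V"
  shows "\<exists>E'. finite E' \<and> E' \<subseteq> V \<and> orthonormal_wrt \<phi> E' \<and> span E' = span (insert a E)"
proof -
  define w where "w = a - (\<Sum>e\<in>E. \<phi> a e *\<^sub>R e)"
  have sum_span: "(\<Sum>e\<in>E. \<phi> a e *\<^sub>R e) \<in> span E"
    by (intro span_sum span_scale span_base)
  have wV: "w \<in> V"
    unfolding w_def using E a V by (intro subspace_diff subspace_sum subspace_scale) auto
  have w_orth: "\<phi> w e = 0" if "e \<in> E" for e
    using orthonormal_wrt_coeff[OF bil E(3) E(1) that, of "\<lambda>e. \<phi> a e"]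
    unfolding w_def by (simp add: bilinear_lsub[OF bil])
  show ?thesis
  proof (cases "w = 0")
    case True
    then have "a \<in> span E" using sum_span unfolding w_def by simp
    then show ?thesis using E by (intro exI[of _ E]) (simp add: span_redundant)
  next
    case False
    define c where "c = sqrt (\<phi> w w)"
    have c: "c > 0" unfolding c_def using pos[OF wV False] by simp
    define w' where "w' = (1 / c) *\<^sub>R w"
    have "w = c *\<^sub>R w'" using c by (simp add: w'_def)
    then have "w \<in> span (insert w' E)" by (simp add: span_base span_scale)
    moreover have "(\<Sum>e\<in>E. \<phi> a e *\<^sub>R e) \<in> span (insert w' E)"
      using sum_span span_mono[of E "insert w' E"] by blast
    ultimately have "a \<in> span (insert w' E)" unfolding w_def by (metis diff_add_cancel span_add)
    moreover have "w' \<in> span (insert a E)"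
      unfolding w'_def w_def using sum_span span_mono[of E "insert a E"]
      by (intro span_scale span_diff) (auto intro: span_base)
    ultimately have "span (insert w' E) = span (insert a E)"
      by (intro span_eq[THEN iffD2] conjI) (auto intro: span_base)
    moreover have "orthonormal_wrt \<phi> (insert w' E)"
      unfolding w'_def c_def using orthonormal_wrt_insert_normalized[OF bil sym E(3) w_orth pos[OF wV False]] .
    moreover have "w' \<in> V" unfolding w'_def using wV V by (simp add: subspace_scale)
    ultimately show ?thesis using E by (intro exI[of _ "insert w' E"]) auto
  qed
qed

lemma gram_schmidt:
  assumes bil: "bilinear \<phi>" and sym: "\<And>x y. \<phi> x y = \<phi> y x"
    and pos: "\<And>x. x \<in> V \<Longrightarrow> x \<noteq> 0 \<Longrightarrow> \<phi> x x > 0" and V: "subspace V"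
    and S: "finite S" "S \<subseteq> V"
  shows "\<exists>E. finite E \<and> E \<subseteq> V \<and> orthonormal_wrt \<phi> E \<and> span E = span S"
  using S
proof (induction S rule: finite_induct)
  case empty
  then show ?case by (intro exI[of _ "{}"]) (auto simp: orthonormal_wrt_def)
next
  case (insert a S)
  then obtain E where E: "finite E" "E \<subseteq> V" "orthonormal_wrt \<phi> E" "span E = span S" by auto
  have "a \<in> V" using insert.prems by simp
  then obtain E' where E': "finite E'" "E' \<subseteq> V" "orthonormal_wrt \<phi> E'" "span E' = span (insert a E)"
    using orthonormal_wrt_extend[OF bil sym pos V E(1-3)] by blast
  have "span (insert a E) = span (insert a S)" using E(4) by (metis span_insert)
  then show ?case using E' by auto
qed

lemma orthonormal_basis_of_exists:
  assumes bil: "bilinear \<phi>" and sym: "\<And>x y. \<phi> x y = \<phi> y x"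
    and pos: "\<And>x. x \<in> V \<Longrightarrow> x \<noteq> 0 \<Longrightarrow> \<phi> x x > 0" and V: "subspace V"
  shows "\<exists>E. orthonormal_basis_of \<phi> V E \<and> card E = dim V"
proof -
  obtain B where B: "B \<subseteq> V" "independent B" "V \<subseteq> span B" "card B = dim V"
    using basis_exists by blast
  have "finite B" using B(2) by (simp add: finiteI_independent)
  then obtain E where E: "finite E" "E \<subseteq> V" "orthonormal_wrt \<phi> E" "span E = span B"
    using gram_schmidt[OF bil sym pos V _ B(1)] by blast
  have VB: "span B = V" using B V by (metis span_minimal subset_antisym)
  have "independent E" using orthonormal_wrt_independent[OF bil E(3) E(1)] .
  then have "card E = dim V" using E(4) VB by (metis dim_span_eq_card_independent)
  moreover have "orthonormal_basis_of \<phi> V E" unfolding orthonormal_basis_of_def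
    using E orthonormal_wrt_expansion[OF bil E(3) E(1)] VB by auto
  ultimately show ?thesis by blast
qed

lemma orthonormal_basis_of_sum_in:
  assumes "subspace V" "orthonormal_basis_of \<phi> V E"
  shows "(\<Sum>e\<in>E. c e *\<^sub>R e) \<in> V"
  using assms unfolding orthonormal_basis_of_def by (auto intro!: subspace_sum subspace_scale)

lemma orthonormal_basis_of_residual:
  assumes bil: "bilinear \<phi>" and sym: "\<And>x y. \<phi> x y = \<phi> y x"
    and E: "orthonormal_basis_of \<phi> V E" and y: "y \<in> V"
  shows "\<phi> (x - (\<Sum>e\<in>E. \<phi> x e *\<^sub>R e)) y = 0"
proof -
  have "\<phi> (\<Sum>e\<in>E. \<phi> x e *\<^sub>R e) y = (\<Sum>e\<in>E. \<phi> x e * \<phi> e y)"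
    by (simp add: bilinear_sum_left[OF bil] bilinear_lmul[OF bil])
  also have "\<dots> = \<phi> x (\<Sum>e\<in>E. \<phi> y e *\<^sub>R e)"
    by (simp add: bilinear_sum_right[OF bil] bilinear_rmul[OF bil] sym[of _ y] mult.commute)
  also have "(\<Sum>e\<in>E. \<phi> y e *\<^sub>R e) = y" using E y unfolding orthonormal_basis_of_def by auto
  finally show ?thesis by (simp add: bilinear_lsub[OF bil])
qed

lemma fproj_orthonormal_basis:
  assumes bil: "bilinear \<phi>" and sym: "\<And>x y. \<phi> x y = \<phi> y x"
    and pos: "\<And>x. x \<in> V \<Longrightarrow> x \<noteq> 0 \<Longrightarrow> \<phi> x x > 0" and V: "subspace V"
    and E: "orthonormal_basis_of \<phi> V E"
  shows "fproj \<phi> V x = (\<Sum>e\<in>E. \<phi> x e *\<^sub>R e)"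
  unfolding fproj_def
proof (rule the_equality)
  let ?w = "\<Sum>e\<in>E. \<phi> x e *\<^sub>R e"
  have wV: "?w \<in> V" by (rule orthonormal_basis_of_sum_in[OF V E])
  have residual: "\<phi> (x - ?w) y = 0" if "y \<in> V" for y
    by (rule orthonormal_basis_of_residual[OF bil sym E that])
  then show "?w \<in> V \<and> (\<forall>w\<in>V. \<phi> (x - ?w) w = 0)" using wV by blast
  fix u assume u: "u \<in> V \<and> (\<forall>w\<in>V. \<phi> (x - u) w = 0)"
  have d: "?w - u \<in> V" using u wV V by (simp add: subspace_diff)
  have "\<phi> (?w - u) (?w - u) = \<phi> (x - u) (?w - u) - \<phi> (x - ?w) (?w - u)"
    by (simp add: bilinear_lsub[OF bil])
  also have "\<dots> = 0" using u d residual by simp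
  finally have "?w - u = 0" using pos[OF d] by force
  then show "u = ?w" by simp
qed

definition linear_on :: "'a::euclidean_space set \<Rightarrow> ('a \<Rightarrow> real) \<Rightarrow> bool" where
  "linear_on V c \<longleftrightarrow> (\<forall>x\<in>V. \<forall>y\<in>V. c (x + y) = c x + c y) \<and> (\<forall>x\<in>V. \<forall>t. c (t *\<^sub>R x) = t * c x)"

lemma linear_imp_linear_on: "linear c \<Longrightarrow> linear_on V c"
  unfolding linear_on_def by (simp add: linear_add linear_scale)

lemma linear_on_sum:
  assumes "linear_on V c" "subspace V" "\<And>i. i \<in> I \<Longrightarrow> v i \<in> V"
  shows "c (\<Sum>i\<in>I. t i *\<^sub>R v i) = (\<Sum>i\<in>I. t i * c (v i))"
  using assms(3)
proof (induction I rule: infinite_finite_induct)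
  case (infinite A) then show ?case
    using assms(1,2) unfolding linear_on_def by (metis mult_zero_left scale_zero_left sum.infinite subspace_0)
next
  case empty then show ?case
    using assms(1,2) unfolding linear_on_def by (metis mult_zero_left scale_zero_left sum.empty subspace_0)
next
  case (insert x F)
  have "(\<Sum>i\<in>F. t i *\<^sub>R v i) \<in> V" using insert assms(2)
    by (intro subspace_sum) (auto intro: subspace_scale)
  moreover have "t x *\<^sub>R v x \<in> V" using insert assms(2) by (auto intro: subspace_scale)
  ultimately show ?case using insert assms(1) unfolding linear_on_def by simp
qed

lemma coordinate_trace_eq:
  assumes V: "subspace V" and fin: "finite E" "finite E'" and sub: "E \<subseteq> V" "E' \<subseteq> V"
    and cE: "\<And>x. x \<in> V \<Longrightarrow> x = (\<Sum>e\<in>E. c e x *\<^sub>R e)"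
    and cE': "\<And>x. x \<in> V \<Longrightarrow> x = (\<Sum>e\<in>E'. c' e x *\<^sub>R e)"
    and lc: "\<And>e. e \<in> E \<Longrightarrow> linear_on V (c e)"
    and lc': "\<And>e. e \<in> E' \<Longrightarrow> linear_on V (c' e)"
    and f: "linear f" "\<And>x. x \<in> V \<Longrightarrow> f x \<in> V"
  shows "(\<Sum>e\<in>E. c e (f e)) = (\<Sum>e\<in>E'. c' e (f e))"
proof -
  have "(\<Sum>e\<in>E. c e (f e)) = (\<Sum>e\<in>E. c e (f (\<Sum>e'\<in>E'. c' e' e *\<^sub>R e')))"
    using cE' sub by (intro sum.cong) auto
  also have "\<dots> = (\<Sum>e\<in>E. c e (\<Sum>e'\<in>E'. c' e' e *\<^sub>R f e'))"
    using f(1) by (simp add: linear_sum linear_scale)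
  also have "\<dots> = (\<Sum>e\<in>E. \<Sum>e'\<in>E'. c' e' e * c e (f e'))"
    using lc sub f(2) by (intro sum.cong refl linear_on_sum[OF _ V]) auto
  also have "\<dots> = (\<Sum>e'\<in>E'. \<Sum>e\<in>E. c e (f e') * c' e' e)"
    by (subst sum.swap) (simp add: mult.commute)
  also have "\<dots> = (\<Sum>e'\<in>E'. c' e' (\<Sum>e\<in>E. c e (f e') *\<^sub>R e))"
    using lc' sub by (intro sum.cong refl linear_on_sum[OF _ V, symmetric]) auto
  also have "\<dots> = (\<Sum>e'\<in>E'. c' e' (f e'))"
    using cE f(2) sub by (intro sum.cong refl) (metis subsetD)
  finally show ?thesis .
qed

lemma trace_on_coordinates:
  assumes V: "subspace V" and fin: "finite E" and sub: "E \<subseteq> V"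
    and cE: "\<And>x. x \<in> V \<Longrightarrow> x = (\<Sum>e\<in>E. c e x *\<^sub>R e)"
    and lc: "\<And>e. e \<in> E \<Longrightarrow> linear_on V (c e)"
    and f: "linear f" "\<And>x. x \<in> V \<Longrightarrow> f x \<in> V"
  shows "trace_on V f = (\<Sum>e\<in>E. c e (f e))"
proof -
  let ?P = "\<lambda>t. \<exists>E. finite E \<and> independent E \<and> span E = V \<and>
       t = (\<Sum>e\<in>E. representation E (f e) e)"
  have key: "t = (\<Sum>e\<in>E. c e (f e))" if "?P t" for t
  proof -
    obtain B where B: "finite B" "independent B" "span B = V" "t = (\<Sum>e\<in>B. representation B (f e) e)"
      using \<open>?P t\<close> by blast
    have "(\<Sum>e\<in>B. representation B (f e) e) = (\<Sum>e\<in>E. c e (f e))"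
    proof (rule coordinate_trace_eq[where c="\<lambda>e x. representation B x e", OF V B(1) fin _ sub _ cE _ lc f])
      show "B \<subseteq> V" using B(3) span_superset by blast
      show "x = (\<Sum>e\<in>B. representation B x e *\<^sub>R e)" if "x \<in> V" for x
        using real_vector.sum_representation_eq[OF B(2) _ B(1) subset_refl, of x] that B(3) by simp
      show "linear_on V (\<lambda>x. representation B x e)" for e
        unfolding linear_on_def B(3)[symmetric] using B(2)
        by (simp add: real_vector.representation_add real_vector.representation_scale)
    qed auto
    then show ?thesis using B(4) by simp
  qed
  obtain B where B: "B \<subseteq> V" "independent B" "V \<subseteq> span B" "card B = dim V"
    using basis_exists by blast
  have "?P (\<Sum>e\<in>B. representation B (f e) e)"
    using B V span_minimal[OF B(1) V] by (intro exI[of _ B]) (auto simp: finiteI_independent)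
  then have "?P (SOME t. ?P t)" by (rule someI)
  then show ?thesis unfolding trace_on_def using key by blast
qed

lemma trace_lin_coordinates:
  fixes T :: "'a::euclidean_space \<Rightarrow> 'a"
  assumes fin: "finite J" and expansion: "\<And>x. x = (\<Sum>j\<in>J. c j x *\<^sub>R v j)"
    and lc: "\<And>j. j \<in> J \<Longrightarrow> linear (c j)" and T: "linear T"
  shows "trace_lin T = (\<Sum>j\<in>J. c j (T (v j)))"
proof -
  interpret T: linear T by (rule T)
  have "(\<Sum>j\<in>J. c j (T (v j))) = (\<Sum>j\<in>J. c j (T (\<Sum>b\<in>Basis. inner (v j) b *\<^sub>R b)))"
    by (simp add: euclidean_representation)
  also have "\<dots> = (\<Sum>j\<in>J. \<Sum>b\<in>Basis. inner (v j) b * c j (T b))"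
  proof (intro sum.cong refl)
    fix j assume "j \<in> J"
    then interpret c: linear "c j" by (rule lc)
    show "c j (T (\<Sum>b\<in>Basis. inner (v j) b *\<^sub>R b)) = (\<Sum>b\<in>Basis. inner (v j) b * c j (T b))"
      by (simp add: c.sum T.sum c.scale T.scale)
  qed
  also have "\<dots> = (\<Sum>b\<in>Basis. inner (\<Sum>j\<in>J. c j (T b) *\<^sub>R v j) b)"
    by (subst sum.swap) (simp add: inner_sum_left mult.commute)
  also have "\<dots> = (\<Sum>b\<in>Basis. inner (T b) b)"
    by (simp flip: expansion)
  finally show ?thesis unfolding trace_lin_def by simp
qed

lemma trace_lin_diff: "trace_lin (\<lambda>z. f z - g z) = trace_lin f - trace_lin g"
  unfolding trace_lin_def by (simp add: inner_diff_left sum_subtractf)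

lemma trace_lin_add: "trace_lin (\<lambda>z. f z + g z) = trace_lin f + trace_lin g"
  unfolding trace_lin_def by (simp add: inner_add_left sum.distrib)

lemma trace_lin_scale: "trace_lin (\<lambda>z. c *\<^sub>R f z) = c * trace_lin f"
  unfolding trace_lin_def by (simp add: sum_distrib_left)

lemma trace_lin_commute:
  fixes f g :: "'a::euclidean_space \<Rightarrow> 'a"
  assumes "linear f" "linear g"
  shows "trace_lin (\<lambda>z. f (g z)) = trace_lin (\<lambda>z. g (f z))"
proof -
  have *: "trace_lin (\<lambda>z. f (g z)) = (\<Sum>b\<in>Basis. \<Sum>c\<in>Basis. inner (g b) c * inner (f c) b)"
    if "linear f" for f g :: "'a \<Rightarrow> 'a"
  proof -
    have "trace_lin (\<lambda>z. f (g z)) = (\<Sum>b\<in>Basis. inner (f (\<Sum>c\<in>Basis. inner (g b) c *\<^sub>R c)) b)"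
      unfolding trace_lin_def by (simp add: euclidean_representation)
    also have "\<dots> = (\<Sum>b\<in>Basis. \<Sum>c\<in>Basis. inner (g b) c * inner (f c) b)"
      using that by (simp add: linear_sum linear_scale inner_sum_left)
    finally show ?thesis .
  qed
  show ?thesis unfolding *[OF assms(1)] *[OF assms(2)]
    by (subst sum.swap) (simp add: mult.commute)
qed

lemma diagonal_sum_frame_invariant:
  fixes g \<psi> :: "'a::euclidean_space \<Rightarrow> 'a \<Rightarrow> real"
  assumes fin: "finite E" "finite J"
    and sym: "\<And>x y. g x y = g y x"
    and cE: "\<And>x. x = (\<Sum>e\<in>E. g x e *\<^sub>R e)"
    and cJ: "\<And>x. x = (\<Sum>j\<in>J. g x (v j) *\<^sub>R v j)"
    and psi: "bilinear \<psi>"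
  shows "(\<Sum>e\<in>E. \<psi> e e) = (\<Sum>j\<in>J. \<psi> (v j) (v j))"
proof -
  have "(\<Sum>e\<in>E. \<psi> e e) = (\<Sum>e\<in>E. \<psi> e (\<Sum>j\<in>J. g e (v j) *\<^sub>R v j))"
    using cJ by (intro sum.cong) auto
  also have "\<dots> = (\<Sum>e\<in>E. \<Sum>j\<in>J. g e (v j) * \<psi> e (v j))"
    using psi by (simp add: bilinear_sum_right bilinear_rmul)
  also have "\<dots> = (\<Sum>j\<in>J. \<Sum>e\<in>E. g (v j) e * \<psi> e (v j))"
    by (subst sum.swap) (simp add: sym)
  also have "\<dots> = (\<Sum>j\<in>J. \<psi> (\<Sum>e\<in>E. g (v j) e *\<^sub>R e) (v j))"
    using psi by (simp add: bilinear_sum_left bilinear_lmul)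
  also have "\<dots> = (\<Sum>j\<in>J. \<psi> (v j) (v j))"
    using cE by metis
  finally show ?thesis .
qed

lemma span_UN_sum:
  fixes V :: "nat \<Rightarrow> 'a::euclidean_space set"
  assumes fin: "finite I" and sub: "\<And>i. i \<in> I \<Longrightarrow> subspace (V i)"
    and x: "x \<in> span (\<Union>i\<in>I. V i)"
  shows "\<exists>u. (\<forall>i\<in>I. u i \<in> V i) \<and> x = (\<Sum>i\<in>I. u i)"
  using x
proof (induction rule: span_induct)
  case base
  show ?case
  proof (rule subspaceI)
    show "0 \<in> Collect (\<lambda>x. \<exists>u. (\<forall>i\<in>I. u i \<in> V i) \<and> x = sum u I)"
      by (intro CollectI exI[of _ "\<lambda>i. 0"]) (simp add: sub subspace_0)
  next
    fix x y assume "x \<in> Collect (\<lambda>x. \<exists>u. (\<forall>i\<in>I. u i \<in> V i) \<and> x = sum u I)"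
      "y \<in> Collect (\<lambda>x. \<exists>u. (\<forall>i\<in>I. u i \<in> V i) \<and> x = sum u I)"
    then obtain u v where "\<forall>i\<in>I. u i \<in> V i" "x = sum u I" "\<forall>i\<in>I. v i \<in> V i" "y = sum v I" by auto
    then show "x + y \<in> Collect (\<lambda>x. \<exists>u. (\<forall>i\<in>I. u i \<in> V i) \<and> x = sum u I)"
      by (intro CollectI exI[of _ "\<lambda>i. u i + v i"]) (simp add: sum.distrib sub subspace_add)
  next
    fix c x assume "x \<in> Collect (\<lambda>x. \<exists>u. (\<forall>i\<in>I. u i \<in> V i) \<and> x = sum u I)"
    then obtain u where "\<forall>i\<in>I. u i \<in> V i" "x = sum u I" by auto
    then show "c *\<^sub>R x \<in> Collect (\<lambda>x. \<exists>u. (\<forall>i\<in>I. u i \<in> V i) \<and> x = sum u I)"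
      by (intro CollectI exI[of _ "\<lambda>i. c *\<^sub>R u i"]) (simp add: scaleR_sum_right sub subspace_scale)
  qed
next
  case (step x)
  then obtain j where j: "j \<in> I" "x \<in> V j" by blast
  show ?case
    by (intro exI[of _ "\<lambda>i. if i = j then x else 0"])
       (use j fin sub in \<open>auto simp: subspace_0\<close>)
qed

section \<open>Lie algebras and the Killing form\<close>

context
  fixes br :: "'a::euclidean_space \<Rightarrow> 'a \<Rightarrow> 'a"
  assumes lie: "lie_bracket br"
begin

lemma br_bilinear: "bilinear br" using lie unfolding lie_bracket_def by simp
lemma br_linear: "linear (br x)" using br_bilinear unfolding bilinear_def by simp
lemma br_antisym: "br x y = - br y x" using lie unfolding lie_bracket_def by blast
lemma br_self[simp]: "br x x = 0"
proof -
  have "br x x = - br x x" by (rule br_antisym)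
  then have "br x x + br x x = 0" by (metis add.right_inverse)
  then have "2 *\<^sub>R br x x = 0" by (simp add: scaleR_2)
  then show ?thesis by simp
qed
lemma br_jacobi: "br x (br y z) + br y (br z x) + br z (br x y) = 0"
  using lie unfolding lie_bracket_def by blast

lemma br_addl: "br (x + y) z = br x z + br y z" by (rule bilinear_ladd[OF br_bilinear])
lemma br_addr: "br z (x + y) = br z x + br z y" by (rule bilinear_radd[OF br_bilinear])
lemma br_diffl: "br (x - y) z = br x z - br y z" by (rule bilinear_lsub[OF br_bilinear])
lemma br_diffr: "br z (x - y) = br z x - br z y" by (rule bilinear_rsub[OF br_bilinear])
lemma br_scalel: "br (c *\<^sub>R x) z = c *\<^sub>R br x z" by (rule bilinear_lmul[OF br_bilinear])
lemma br_scaler: "br z (c *\<^sub>R x) = c *\<^sub>R br z x" by (rule bilinear_rmul[OF br_bilinear])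
lemma br_0l[simp]: "br 0 z = 0" by (rule bilinear_lzero[OF br_bilinear])
lemma br_0r[simp]: "br z 0 = 0" by (rule bilinear_rzero[OF br_bilinear])
lemma br_sumr: "br z (\<Sum>i\<in>I. f i) = (\<Sum>i\<in>I. br z (f i))"
  by (rule bilinear_sum_right[OF br_bilinear])

lemma br_br_left: "br (br x y) z = br x (br y z) - br y (br x z)"
proof -
  have "br (br x y) z = - br z (br x y)" by (rule br_antisym)
  also have "\<dots> = br x (br y z) + br y (br z x)"
  proof -
    have "br z (br x y) + (br x (br y z) + br y (br z x)) = 0" using br_jacobi[of x y z] by (simp add: ac_simps)
    then show ?thesis by (rule minus_unique)
  qed
  also have "br y (br z x) = - br y (br x z)" using br_antisym[of z x] br_scaler[of y "-1"] by simp
  finally show ?thesis by simp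
qed

lemma linear_br_br: "linear (\<lambda>z. br x (br y z))"
  using br_linear linear_compose[of "br y" "br x"] by (simp add: o_def)

lemma killing_sym: "killing br x y = killing br y x"
  unfolding killing_def using trace_lin_commute[OF br_linear br_linear] by simp

lemma killing_addl: "killing br (x + x') y = killing br x y + killing br x' y"
  unfolding killing_def by (simp add: br_addl trace_lin_add)
lemma killing_scalel: "killing br (c *\<^sub>R x) y = c * killing br x y"
  unfolding killing_def by (simp add: br_scalel trace_lin_scale)

lemma killing_bilinear: "bilinear (killing br)"
proof -
  have l: "linear (\<lambda>x. killing br x y)" for y
    by (rule linearI) (simp_all add: killing_addl killing_scalel)
  have r: "linear (\<lambda>x. killing br y x)" for y
    using l[of y] by (simp add: killing_sym)
  show ?thesis unfolding bilinear_def using l r by simp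
qed

lemma killing_invariant: "killing br (br x y) z = - killing br y (br x z)"
proof -
  have "killing br (br x y) z = trace_lin (\<lambda>w. br x (br y (br z w))) - trace_lin (\<lambda>w. br y (br x (br z w)))"
    unfolding killing_def by (simp add: br_br_left trace_lin_diff)
  moreover have "killing br y (br x z) = trace_lin (\<lambda>w. br y (br x (br z w))) - trace_lin (\<lambda>w. br y (br z (br x w)))"
    unfolding killing_def by (simp add: br_br_left br_diffr trace_lin_diff)
  moreover have "trace_lin (\<lambda>w. br x (br y (br z w))) = trace_lin (\<lambda>w. br y (br z (br x w)))"
    using trace_lin_commute[OF br_linear linear_br_br, of x y z] by simp
  ultimately show ?thesis by simp
qed

lemma simple_imp_perfect:
  assumes "simple_sub br UNIV"
  shows "derived br UNIV = UNIV"
proof -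
  obtain a b where "br a b \<noteq> 0" using assms unfolding simple_sub_def by auto
  moreover have "br a b \<in> derived br UNIV" unfolding derived_def by (auto intro: span_base)
  ultimately have "derived br UNIV \<noteq> {0}" by auto
  moreover have "ideal_of br UNIV (derived br UNIV)"
    unfolding ideal_of_def derived_def by (auto intro: span_base)
  ultimately show ?thesis using assms unfolding simple_sub_def by blast
qed

lemma trace_ad_br: "trace_lin (br (br a b)) = 0"
proof -
  have "br (br a b) = (\<lambda>z. br a (br b z) - br b (br a z))"
    by (rule ext) (rule br_br_left)
  then show ?thesis
    using trace_lin_commute[OF br_linear br_linear, of a b] by (simp add: trace_lin_diff)
qed

lemma trace_ad_eq_0:
  assumes "simple_sub br UNIV"
  shows "trace_lin (br x) = 0"
proof -
  have lin: "linear (\<lambda>x. trace_lin (br x))"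
  proof (rule linearI)
    fix a b c
    have "br (a + b) = (\<lambda>z. br a z + br b z)" by (rule ext) (rule br_addl)
    then show "trace_lin (br (a + b)) = trace_lin (br a) + trace_lin (br b)"
      by (simp add: trace_lin_add)
    have "br (c *\<^sub>R a) = (\<lambda>z. c *\<^sub>R br a z)" by (rule ext) (rule br_scalel)
    then show "trace_lin (br (c *\<^sub>R a)) = c *\<^sub>R trace_lin (br a)"
      by (simp add: trace_lin_scale)
  qed
  have "x \<in> span {br a b |a b. a \<in> UNIV \<and> b \<in> UNIV}"
    using simple_imp_perfect[OF assms] unfolding derived_def by auto
  then show ?thesis
    by (rule real_vector.linear_eq_0_on_span[OF lin, rotated]) (auto simp: trace_ad_br)
qed

end

section \<open>Scalar curvature of a unimodular metric Lie algebra\<close>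

definition triple_sum :: "'b set \<Rightarrow> ('b \<Rightarrow> 'b \<Rightarrow> 'b \<Rightarrow> real) \<Rightarrow> real" where
  "triple_sum E f = (\<Sum>a\<in>E. \<Sum>b\<in>E. \<Sum>c\<in>E. f a b c)"

lemma triple_sum_swap12: "triple_sum E f = triple_sum E (\<lambda>a b c. f b a c)"
  unfolding triple_sum_def by (rule sum.swap)
lemma triple_sum_swap23: "triple_sum E f = triple_sum E (\<lambda>a b c. f a c b)"
  unfolding triple_sum_def by (intro sum.cong refl sum.swap)
lemma triple_sum_cycle: "triple_sum E f = triple_sum E (\<lambda>a b c. f b c a)"
  using triple_sum_swap23[of E f] triple_sum_swap12[of E "\<lambda>a b c. f a c b"] by simp
lemma triple_sum_add: "triple_sum E (\<lambda>a b c. f a b c + h a b c) = triple_sum E f + triple_sum E h"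
  unfolding triple_sum_def by (simp add: sum.distrib)
lemma triple_sum_diff: "triple_sum E (\<lambda>a b c. f a b c - h a b c) = triple_sum E f - triple_sum E h"
  unfolding triple_sum_def by (simp add: sum_subtractf)
lemma triple_sum_cmult: "triple_sum E (\<lambda>a b c. r * f a b c) = r * triple_sum E f"
  unfolding triple_sum_def by (simp add: sum_distrib_left)
lemma triple_sum_neg: "triple_sum E (\<lambda>a b c. - f a b c) = - triple_sum E f"
  unfolding triple_sum_def by (simp add: sum_negf)
lemma triple_sum_cong: "(\<And>a b c. f a b c = h a b c) \<Longrightarrow> triple_sum E f = triple_sum E h"
  unfolding triple_sum_def by simp

lemma koszul_polynomial_identity: "((u::real) - v + w)/2 * ((v - w + u)/2) + u * ((x - y + z)/2) =
     1/4 * u^2 - 1/4 * v^2 - 1/4 * w^2 + 1/2 * (v * w)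
     + 1/2 * (u * x) - 1/2 * (u * y) + 1/2 * (u * z)"
  unfolding power2_eq_square by (simp add: field_simps)

lemma triple_sum_antisym:
  fixes C :: "'b \<Rightarrow> 'b \<Rightarrow> 'b \<Rightarrow> real"
  assumes anti: "\<And>a b c. C a b c = - C b a c"
  shows "triple_sum E (\<lambda>a b c. C a b c * C b a c) = - triple_sum E (\<lambda>a b c. (C a b c)^2)"
    and "triple_sum E (\<lambda>a b c. C a b c * C b c a) = - triple_sum E (\<lambda>a b c. C a b c * C a c b)"
    and "triple_sum E (\<lambda>a b c. C a b c * C c b a) = triple_sum E (\<lambda>a b c. C a b c * C a c b)"
proof -
  have "triple_sum E (\<lambda>a b c. C a b c * C b a c) = triple_sum E (\<lambda>a b c. - ((C a b c)^2))"
    by (rule triple_sum_cong) (subst anti[of b a c], simp add: power2_eq_square)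
  then show "triple_sum E (\<lambda>a b c. C a b c * C b a c) = - triple_sum E (\<lambda>a b c. (C a b c)^2)"
    by (simp add: triple_sum_neg)
  have "triple_sum E (\<lambda>a b c. C a b c * C b c a) = triple_sum E (\<lambda>a b c. - (C b a c * C b c a))"
    by (rule triple_sum_cong) (subst anti[of a b c], simp)
  also have "\<dots> = - triple_sum E (\<lambda>a b c. C a b c * C a c b)"
    by (simp add: triple_sum_neg triple_sum_swap12[of E "\<lambda>a b c. C a b c * C a c b"])
  finally show cyc: "triple_sum E (\<lambda>a b c. C a b c * C b c a) = - triple_sum E (\<lambda>a b c. C a b c * C a c b)" .
  have "triple_sum E (\<lambda>a b c. C a b c * C c b a) = triple_sum E (\<lambda>a b c. - (C a b c * C b c a))"
    by (rule triple_sum_cong) (subst anti[of c b a], simp)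
  then show "triple_sum E (\<lambda>a b c. C a b c * C c b a) = triple_sum E (\<lambda>a b c. C a b c * C a c b)"
    using cyc by (simp add: triple_sum_neg)
qed

text \<open>For C a b c = g([a,b],c), G a b c is the Koszul expression for g(nabla_a b, c).\<close>

lemma triple_sum_koszul:
  fixes C :: "'b \<Rightarrow> 'b \<Rightarrow> 'b \<Rightarrow> real"
  assumes anti: "\<And>a b c. C a b c = - C b a c"
  defines "G \<equiv> \<lambda>a b c. (C a b c - C b c a + C c a b) / 2"
  shows "triple_sum E (\<lambda>a b c. G a b c * G b c a + C a b c * G c b a)
        = 1/4 * triple_sum E (\<lambda>a b c. (C a b c)^2) + 1/2 * triple_sum E (\<lambda>a b c. C a b c * C a c b)"
proof -
  let ?P = "triple_sum E (\<lambda>a b c. (C a b c)^2)" and ?Q = "triple_sum E (\<lambda>a b c. C a b c * C a c b)"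
  have "triple_sum E (\<lambda>a b c. G a b c * G b c a + C a b c * G c b a) =
     triple_sum E (\<lambda>a b c. 1/4 * (C a b c)^2 - 1/4 * (C b c a)^2 - 1/4 * (C c a b)^2 + 1/2 * (C b c a * C c a b)
     + 1/2 * (C a b c * C c b a) - 1/2 * (C a b c * C b a c) + 1/2 * (C a b c * C a c b))"
    unfolding G_def by (rule triple_sum_cong) (rule koszul_polynomial_identity)
  also have "\<dots> = 1/4 * ?P - 1/4 * triple_sum E (\<lambda>a b c. (C b c a)^2) - 1/4 * triple_sum E (\<lambda>a b c. (C c a b)^2)
     + 1/2 * triple_sum E (\<lambda>a b c. C b c a * C c a b) + 1/2 * triple_sum E (\<lambda>a b c. C a b c * C c b a)
     - 1/2 * triple_sum E (\<lambda>a b c. C a b c * C b a c) + 1/2 * ?Q"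
    by (simp only: triple_sum_add triple_sum_diff triple_sum_cmult)
  also have "\<dots> = 1/4 * ?P + 1/2 * ?Q"
    using triple_sum_cycle[of E "\<lambda>a b c. (C a b c)^2"] triple_sum_cycle[of E "\<lambda>a b c. (C b c a)^2"]
      triple_sum_cycle[of E "\<lambda>a b c. C a b c * C b c a"] triple_sum_antisym[OF anti, of E]
    by simp
  finally show ?thesis .
qed

locale orthonormal_frame =
  fixes br :: "'a::euclidean_space \<Rightarrow> 'a \<Rightarrow> 'a" and g :: "'a \<Rightarrow> 'a \<Rightarrow> real" and E :: "'a set"
  assumes lie: "lie_bracket br" and g_bilinear: "bilinear g" and g_sym: "g x y = g y x"
    and finite_E: "finite E" and orthonormal: "orthonormal_wrt g E"
    and expansion: "x = (\<Sum>e\<in>E. g x e *\<^sub>R e)"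
begin

definition koszul :: "'a \<Rightarrow> 'a \<Rightarrow> 'a \<Rightarrow> real" where
  "koszul X Y Z = (g (br X Y) Z - g (br Y Z) X + g (br Z X) Y) / 2"

lemma levi_civita_eq: "levi_civita g br E X Y = (\<Sum>e\<in>E. koszul X Y e *\<^sub>R e)"
  unfolding levi_civita_def koszul_def by simp

lemma g_levi_civita: "a \<in> E \<Longrightarrow> g (levi_civita g br E X Y) a = koszul X Y a"
  unfolding levi_civita_eq by (rule orthonormal_wrt_coeff[OF g_bilinear orthonormal finite_E])

lemma linear_koszul_left: "linear (\<lambda>X. koszul X Y Z)"
  by (rule linearI) (simp_all add: koszul_def br_addl[OF lie] br_addr[OF lie] br_scalel[OF lie]
      br_scaler[OF lie] bilinear_ladd[OF g_bilinear] bilinear_radd[OF g_bilinear]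
      bilinear_lmul[OF g_bilinear] bilinear_rmul[OF g_bilinear] field_simps)

lemma linear_koszul_middle: "linear (\<lambda>Y. koszul X Y Z)"
  by (rule linearI) (simp_all add: koszul_def br_addl[OF lie] br_addr[OF lie] br_scalel[OF lie]
      br_scaler[OF lie] bilinear_ladd[OF g_bilinear] bilinear_radd[OF g_bilinear]
      bilinear_lmul[OF g_bilinear] bilinear_rmul[OF g_bilinear] field_simps)

lemma koszul_sum_left: "koszul (\<Sum>c\<in>E. t c *\<^sub>R c) Y Z = (\<Sum>c\<in>E. t c * koszul c Y Z)"
proof -
  interpret linear "\<lambda>X. koszul X Y Z" by (rule linear_koszul_left)
  show ?thesis by (simp add: sum scale)
qed

lemma koszul_sum_middle: "koszul X (\<Sum>c\<in>E. t c *\<^sub>R c) Z = (\<Sum>c\<in>E. t c * koszul X c Z)"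
proof -
  interpret linear "\<lambda>Y. koszul X Y Z" by (rule linear_koszul_middle)
  show ?thesis by (simp add: sum scale)
qed

lemma g_curvature_diag:
  assumes "a \<in> E"
  shows "g (curvature g br E a b b) a = (\<Sum>c\<in>E. koszul b b c * koszul a c a)
     - (\<Sum>c\<in>E. koszul a b c * koszul b c a + g (br a b) c * koszul c b a)"
proof -
  have "g (curvature g br E a b b) a = koszul a (levi_civita g br E b b) a
      - koszul b (levi_civita g br E a b) a - koszul (br a b) b a"
    unfolding curvature_def using assms by (simp add: bilinear_lsub[OF g_bilinear] g_levi_civita)
  also have "koszul (br a b) b a = (\<Sum>c\<in>E. g (br a b) c * koszul c b a)"
    using koszul_sum_left[of "\<lambda>c. g (br a b) c" b a] expansion[of "br a b"] by simp
  finally show ?thesis by (simp add: levi_civita_eq koszul_sum_middle sum.distrib)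
qed

lemma sum_koszul_diag: "(\<Sum>a\<in>E. koszul a c a) = - trace_lin (br c)"
proof -
  have "koszul a c a = - g (br c a) a" for a
    unfolding koszul_def using br_antisym[OF lie, of a c]
    by (simp add: bilinear_lneg[OF g_bilinear] bilinear_lzero[OF g_bilinear] br_self[OF lie])
  moreover have "(\<Sum>a\<in>E. g (br c a) a) = trace_lin (br c)"
    by (rule trace_lin_coordinates[where v="\<lambda>e. e", symmetric, OF finite_E expansion _ br_linear[OF lie]])
       (use g_bilinear in \<open>simp add: bilinear_def\<close>)
  ultimately show ?thesis by (simp add: sum_negf)
qed

lemma sum_g_br_sq: "(\<Sum>a\<in>E. \<Sum>b\<in>E. g (br a b) (br a b)) = triple_sum E (\<lambda>a b c. (g (br a b) c)^2)"
proof -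
  have "g w w = (\<Sum>c\<in>E. (g w c)^2)" for w
    using arg_cong[OF expansion[of w], of "g w"]
    by (simp add: bilinear_sum_right[OF g_bilinear] bilinear_rmul[OF g_bilinear] power2_eq_square)
  then show ?thesis unfolding triple_sum_def by simp
qed

lemma killing_diag_eq: "killing br a a = (\<Sum>b\<in>E. \<Sum>c\<in>E. g (br a b) c * g (br a c) b)"
proof -
  have "killing br a a = (\<Sum>b\<in>E. g (br a (br a b)) b)"
    unfolding killing_def
    by (rule trace_lin_coordinates[where v="\<lambda>e. e", OF finite_E expansion _ linear_br_br[OF lie]])
       (use g_bilinear in \<open>simp add: bilinear_def\<close>)
  also have "\<dots> = (\<Sum>b\<in>E. g (br a (\<Sum>c\<in>E. g (br a b) c *\<^sub>R c)) b)"
    by (intro sum.cong refl arg_cong[where f="\<lambda>v. g (br a v) _"] expansion)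
  also have "\<dots> = (\<Sum>b\<in>E. \<Sum>c\<in>E. g (br a b) c * g (br a c) b)"
    by (simp add: br_sumr[OF lie] br_scaler[OF lie] bilinear_sum_left[OF g_bilinear]
        bilinear_lmul[OF g_bilinear])
  finally show ?thesis .
qed

theorem scalar_curvature_sum:
  assumes unimodular: "\<And>x. trace_lin (br x) = 0"
  shows "(\<Sum>a\<in>E. \<Sum>b\<in>E. g (curvature g br E a b b) a)
     = -1/4 * (\<Sum>a\<in>E. \<Sum>b\<in>E. g (br a b) (br a b)) - 1/2 * (\<Sum>a\<in>E. killing br a a)"
proof -
  define C where "C a b c = g (br a b) c" for a b c
  have "(\<Sum>a\<in>E. \<Sum>b\<in>E. \<Sum>c\<in>E. koszul b b c * koszul a c a)
      = (\<Sum>b\<in>E. \<Sum>c\<in>E. \<Sum>a\<in>E. koszul b b c * koszul a c a)"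
    by (subst sum.swap) (intro sum.cong refl sum.swap)
  then have mean_curvature_term: "(\<Sum>a\<in>E. \<Sum>b\<in>E. \<Sum>c\<in>E. koszul b b c * koszul a c a) = 0"
    by (simp add: sum_distrib_left[symmetric] sum_koszul_diag unimodular)
  have "C a b c = - C b a c" for a b c
    unfolding C_def using br_antisym[OF lie, of a b] by (simp add: bilinear_lneg[OF g_bilinear])
  then have "triple_sum E (\<lambda>a b c. koszul a b c * koszul b c a + C a b c * koszul c b a) =
      1/4 * triple_sum E (\<lambda>a b c. (C a b c)^2) + 1/2 * triple_sum E (\<lambda>a b c. C a b c * C a c b)"
    unfolding koszul_def C_def[symmetric] by (rule triple_sum_koszul)
  then have "(\<Sum>a\<in>E. \<Sum>b\<in>E. g (curvature g br E a b b) a) =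
      - (1/4 * triple_sum E (\<lambda>a b c. (C a b c)^2) + 1/2 * triple_sum E (\<lambda>a b c. C a b c * C a c b))"
    using mean_curvature_term unfolding triple_sum_def C_def by (simp add: g_curvature_diag sum_subtractf)
  then show ?thesis unfolding sum_g_br_sq killing_diag_eq triple_sum_def C_def by simp
qed

end

section \<open>The Cartan decomposition and the form Q\<close>

locale cartan =
  fixes br :: "'a::euclidean_space \<Rightarrow> 'a \<Rightarrow> 'a" and k :: "'a set"
  assumes lie: "lie_bracket br" and cartan: "cartan_k br k"
begin

abbreviation "B \<equiv> killing br"
abbreviation "p \<equiv> perp_k br k"
abbreviation "Q \<equiv> Qform br k"

lemma k_subspace: "subspace k" using cartan unfolding cartan_k_def by simp
lemma br_k_k: "x \<in> k \<Longrightarrow> y \<in> k \<Longrightarrow> br x y \<in> k" using cartan unfolding cartan_k_def by simp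
lemma br_k_p: "x \<in> k \<Longrightarrow> y \<in> p \<Longrightarrow> br x y \<in> p" using cartan unfolding cartan_k_def by simp
lemma br_p_p: "x \<in> p \<Longrightarrow> y \<in> p \<Longrightarrow> br x y \<in> k" using cartan unfolding cartan_k_def by simp
lemma B_neg_k: "x \<in> k \<Longrightarrow> x \<noteq> 0 \<Longrightarrow> B x x < 0" using cartan unfolding cartan_k_def by simp
lemma B_pos_p: "x \<in> p \<Longrightarrow> x \<noteq> 0 \<Longrightarrow> B x x > 0" using cartan unfolding cartan_k_def by simp
lemma k_p_decomp: "\<exists>u\<in>k. \<exists>v\<in>p. x = u + v" using cartan unfolding cartan_k_def by simp

lemma B_bilinear: "bilinear B" by (rule killing_bilinear[OF lie])
lemma B_sym: "B x y = B y x" by (rule killing_sym[OF lie])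
lemma B_invariant: "B (br x y) z = - B y (br x z)" by (rule killing_invariant[OF lie])

lemma B_k_eq_0: "x \<in> k \<Longrightarrow> B x x = 0 \<Longrightarrow> x = 0" using B_neg_k by force

lemma p_subspace: "subspace p"
  unfolding subspace_def perp_k_def
  by (auto simp: bilinear_ladd[OF B_bilinear] bilinear_lmul[OF B_bilinear] bilinear_lzero[OF B_bilinear])

lemma B_k_p: "x \<in> k \<Longrightarrow> y \<in> p \<Longrightarrow> B x y = 0"
  unfolding perp_k_def using B_sym by auto
lemma B_p_k: "x \<in> p \<Longrightarrow> y \<in> k \<Longrightarrow> B x y = 0"
  unfolding perp_k_def by auto

definition kproj :: "'a \<Rightarrow> 'a" where "kproj x = fproj B k x"

lemma kproj_eq:
  assumes "u \<in> k" "v \<in> p" "x = u + v"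
  shows "kproj x = u"
  unfolding kproj_def fproj_def
proof (rule the_equality)
  show "u \<in> k \<and> (\<forall>w\<in>k. B (x - u) w = 0)" using assms B_p_k by auto
  fix u' assume h: "u' \<in> k \<and> (\<forall>w\<in>k. B (x - u') w = 0)"
  have d: "u - u' \<in> k" using h assms k_subspace by (simp add: subspace_diff)
  have "B (u - u') w = B (x - u') w - B (x - u) w" for w
    by (simp add: bilinear_lsub[OF B_bilinear, symmetric])
  then have "B (u - u') (u - u') = 0" using h d assms(1) B_p_k assms by auto
  then have "u - u' = 0" using B_k_eq_0 d by blast
  then show "u' = u" by simp
qed

definition pproj :: "'a \<Rightarrow> 'a" where "pproj x = x - kproj x"

lemma kproj_pproj: "kproj x \<in> k" "pproj x \<in> p" "x = kproj x + pproj x"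
proof -
  obtain u v where uv: "u \<in> k" "v \<in> p" "x = u + v" using k_p_decomp by blast
  then have "kproj x = u" by (rule kproj_eq)
  then show "kproj x \<in> k" "pproj x \<in> p" "x = kproj x + pproj x" using uv unfolding pproj_def by auto
qed

lemma kproj_k: "x \<in> k \<Longrightarrow> kproj x = x" using kproj_eq[of x 0 x] p_subspace by (simp add: subspace_0)
lemma kproj_p: "x \<in> p \<Longrightarrow> kproj x = 0" using kproj_eq[of 0 x x] k_subspace by (simp add: subspace_0)
lemma pproj_k: "x \<in> k \<Longrightarrow> pproj x = 0" by (simp add: pproj_def kproj_k)
lemma pproj_p: "x \<in> p \<Longrightarrow> pproj x = x" by (simp add: pproj_def kproj_p)

lemma linear_kproj: "linear kproj"
proof (rule linearI)
  fix x y
  show "kproj (x + y) = kproj x + kproj y"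
    using kproj_eq[of "kproj x + kproj y" "pproj x + pproj y" "x + y"] kproj_pproj[of x] kproj_pproj[of y] k_subspace p_subspace
    by (simp add: subspace_add algebra_simps)
next
  fix c x
  show "kproj (c *\<^sub>R x) = c *\<^sub>R kproj x"
    using kproj_eq[of "c *\<^sub>R kproj x" "c *\<^sub>R pproj x" "c *\<^sub>R x"] kproj_pproj[of x] k_subspace p_subspace
    by (simp add: subspace_scale scaleR_add_right[symmetric])
qed

lemma linear_pproj: "linear pproj"
  unfolding pproj_def using linear_kproj by (intro linear_compose_sub linear_id[unfolded id_def]) 

lemma Q_eq: "Q x y = B (pproj x) (pproj y) - B (kproj x) (kproj y)"
  unfolding Qform_def pproj_def kproj_def ..

lemma Q_bilinear: "bilinear Q"
proof -
  interpret a: linear kproj by (rule linear_kproj)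
  interpret b: linear pproj by (rule linear_pproj)
  show ?thesis unfolding bilinear_def Q_eq
    by (auto intro!: linearI simp: a.add a.scale b.add b.scale bilinear_ladd[OF B_bilinear] bilinear_radd[OF B_bilinear]
        bilinear_lmul[OF B_bilinear] bilinear_rmul[OF B_bilinear] algebra_simps)
qed

lemma Q_linear_left: "linear (\<lambda>x. Q x f)" using Q_bilinear unfolding bilinear_def by simp

lemma Q_sym: "Q x y = Q y x" unfolding Q_eq using B_sym by metis

lemma Q_pos: "x \<noteq> 0 \<Longrightarrow> Q x x > 0"
proof -
  assume x: "x \<noteq> 0"
  have a: "B (pproj x) (pproj x) \<ge> 0" using B_pos_p[of "pproj x"] kproj_pproj(2)[of x]
    by (cases "pproj x = 0") (auto simp: bilinear_lzero[OF B_bilinear])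
  have b: "B (kproj x) (kproj x) \<le> 0" using B_neg_k[of "kproj x"] kproj_pproj(1)[of x]
    by (cases "kproj x = 0") (auto simp: bilinear_lzero[OF B_bilinear])
  have "pproj x \<noteq> 0 \<or> kproj x \<noteq> 0" using x kproj_pproj(3)[of x] by (metis add_0_left)
  then have "B (pproj x) (pproj x) > 0 \<or> B (kproj x) (kproj x) < 0" using B_pos_p B_neg_k kproj_pproj(1,2) by blast
  then show ?thesis unfolding Q_eq using a b by linarith
qed

lemma Q_kk: "x \<in> k \<Longrightarrow> y \<in> k \<Longrightarrow> Q x y = - B x y"
  by (simp add: Q_eq pproj_k kproj_k bilinear_lzero[OF B_bilinear])
lemma Q_pp: "x \<in> p \<Longrightarrow> y \<in> p \<Longrightarrow> Q x y = B x y"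
  by (simp add: Q_eq pproj_p kproj_p bilinear_lzero[OF B_bilinear])
lemma Q_kp: "x \<in> k \<Longrightarrow> y \<in> p \<Longrightarrow> Q x y = 0"
  by (simp add: Q_eq pproj_p kproj_p pproj_k kproj_k bilinear_lzero[OF B_bilinear] bilinear_rzero[OF B_bilinear])
lemma Q_pk: "x \<in> p \<Longrightarrow> y \<in> k \<Longrightarrow> Q x y = 0"
  using Q_kp Q_sym by metis

lemma B_orth_proj_k:
  assumes W: "subspace W" "W \<subseteq> k" and x: "x \<in> k"
  shows "\<exists>w\<in>W. x - w \<in> k \<and> (\<forall>y\<in>W. B (x - w) y = 0)"
proof -
  obtain E where E: "orthonormal_basis_of Q W E"
    using orthonormal_basis_of_exists[OF Q_bilinear Q_sym _ W(1)] Q_pos by blast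
  define w where "w = (\<Sum>e\<in>E. Q x e *\<^sub>R e)"
  have wW: "w \<in> W" unfolding w_def by (rule orthonormal_basis_of_sum_in[OF W(1) E])
  have xw: "x - w \<in> k" using wW W x k_subspace by (auto simp: subspace_diff)
  have "B (x - w) y = 0" if y: "y \<in> W" for y
  proof -
    have "Q (x - w) y = 0" unfolding w_def by (rule orthonormal_basis_of_residual[OF Q_bilinear Q_sym E y])
    then show ?thesis using Q_kk[OF xw, of y] y W by auto
  qed
  then show ?thesis using wW xw by blast
qed

lemma br_p_k: "y \<in> p \<Longrightarrow> f \<in> k \<Longrightarrow> br y f \<in> p"
  using br_k_p br_antisym[OF lie, of y f] p_subspace by (simp add: subspace_neg)

lemma Q_br_p_p_swap:
  assumes y: "y \<in> p" and z: "z \<in> p" and h: "h \<in> k"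
  shows "Q (br y z) h = Q (br y h) z"
proof -
  have "Q (br y z) h = - B (br y z) h" using Q_kk[OF br_p_p[OF y z] h] .
  also have "B (br y z) h = - B (br y h) z" using B_invariant[of y z h] B_sym[of z "br y h"] by simp
  also have "B (br y h) z = Q (br y h) z" using Q_pp[OF br_p_k[OF y h] z] by simp
  finally show ?thesis by simp
qed

end

section \<open>The ideals of k and adapted bases\<close>

locale cartan_ideals = cartan br k for br :: "'a::euclidean_space \<Rightarrow> 'a \<Rightarrow> 'a" and k +
  fixes K :: "nat \<Rightarrow> 'a set" and r s :: nat
  assumes simple_ideals: "\<forall>i\<in>{1..r}. ideal_of br (derived br k) (K i) \<and> simple_sub br (K i)"
    and all_simple_ideals: "\<forall>I. ideal_of br (derived br k) I \<and> simple_sub br I \<longrightarrow> (\<exists>i\<in>{1..r}. I = K i)"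
    and distinct: "inj_on K {1..r}"
    and s_def: "s = (if centre br k = {0} then 0 else 1)"
    and centre_K: "s = 1 \<longrightarrow> K (r + 1) = centre br k"
begin

abbreviation "d \<equiv> derived br k"
abbreviation "z \<equiv> centre br k"
abbreviation "J \<equiv> span (\<Union>i\<in>{1..r}. K i)"
abbreviation "N \<equiv> {1..r+s}"
abbreviation "I0 \<equiv> {0..r+s}"

lemma d_subspace: "subspace d" unfolding derived_def by simp
lemma d_sub_k: "d \<subseteq> k" unfolding derived_def by (rule span_minimal) (use br_k_k k_subspace in auto)
lemma br_k_k_in_d: "x \<in> k \<Longrightarrow> y \<in> k \<Longrightarrow> br x y \<in> d" unfolding derived_def by (auto intro: span_base)

lemma K_ideal: assumes "i \<in> {1..r}"
  shows "subspace (K i)" "K i \<subseteq> d" "\<And>x y. x \<in> d \<Longrightarrow> y \<in> K i \<Longrightarrow> br x y \<in> K i" "simple_sub br (K i)"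
  using simple_ideals assms unfolding ideal_of_def by auto

lemma K_sub_k: "i \<in> {1..r} \<Longrightarrow> K i \<subseteq> k" using K_ideal(2) d_sub_k by blast

lemma centre_k: "subspace z" "z \<subseteq> k" "\<And>x y. x \<in> z \<Longrightarrow> y \<in> k \<Longrightarrow> br x y = 0"
proof -
  show "subspace z" unfolding subspace_def centre_def using k_subspace
    by (auto simp: subspace_0 subspace_add subspace_scale br_addl[OF lie] br_scalel[OF lie] br_0l[OF lie])
  show "z \<subseteq> k" unfolding centre_def by auto
  show "\<And>x y. x \<in> z \<Longrightarrow> y \<in> k \<Longrightarrow> br x y = 0" unfolding centre_def by auto
qed

lemma B_linear: "linear (B x)"
  using B_bilinear unfolding bilinear_def by simp

lemma B_centre_derived: assumes "x \<in> z" "y \<in> d" shows "B x y = 0"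
proof -
  have "B x w = 0" if hw: "w \<in> {br a b |a b. a \<in> k \<and> b \<in> k}" for w
  proof -
    obtain a b where w: "w = br a b" "a \<in> k" "b \<in> k" using hw by blast
    have "br a x = 0" using centre_k(3)[OF assms(1) w(2)] br_antisym[OF lie, of a x] by simp
    then show ?thesis using B_invariant[of a x b] w by (simp add: bilinear_lzero[OF B_bilinear])
  qed
  then show ?thesis using real_vector.linear_eq_0_on_span[OF B_linear] assms(2) unfolding derived_def by blast
qed

lemma K_perfect: assumes i: "i \<in> {1..r}"
  shows "K i \<subseteq> span {br a b |a b. a \<in> K i \<and> b \<in> K i}"
proof -
  let ?D = "span {br a b |a b. a \<in> K i \<and> b \<in> K i}"
  have brK: "a \<in> K i \<Longrightarrow> b \<in> K i \<Longrightarrow> br a b \<in> K i" for a b using K_ideal[OF i] by blast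
  have DK: "?D \<subseteq> K i" by (rule span_minimal) (use brK K_ideal(1)[OF i] in auto)
  have "ideal_of br (K i) ?D" unfolding ideal_of_def using DK
    by (auto intro!: span_base)
  moreover have "?D \<noteq> {0}"
  proof -
    obtain a b where "a \<in> K i" "b \<in> K i" "br a b \<noteq> 0" using K_ideal(4)[OF i] unfolding simple_sub_def by blast
    then show ?thesis by (metis (mono_tags, lifting) mem_Collect_eq singletonD span_base)
  qed
  ultimately have "?D = K i" using K_ideal(4)[OF i] unfolding simple_sub_def by blast
  then show ?thesis by simp
qed

lemma K_inter_K: assumes "i \<in> {1..r}" "j \<in> {1..r}" "i \<noteq> j" shows "K i \<inter> K j = {0}"
proof -
  have I: "ideal_of br (K i) (K i \<inter> K j)" "ideal_of br (K j) (K i \<inter> K j)"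
    unfolding ideal_of_def using K_ideal[OF assms(1)] K_ideal[OF assms(2)]
    by (auto simp: subspace_inter)
  have a: "K i \<inter> K j = {0} \<or> K i \<inter> K j = K i" using I(1) K_ideal(4)[OF assms(1)] unfolding simple_sub_def by blast
  have b: "K i \<inter> K j = {0} \<or> K i \<inter> K j = K j" using I(2) K_ideal(4)[OF assms(2)] unfolding simple_sub_def by blast
  have "K i \<noteq> K j" using distinct assms unfolding inj_on_def by blast
  then show ?thesis using a b by blast
qed

lemma br_simple_K_other: assumes "i \<in> {1..r}" "j \<in> {1..r}" "i \<noteq> j" "x \<in> K i" "y \<in> K j"
  shows "br x y = 0"
proof -
  have "br x y \<in> K j" using K_ideal[OF assms(2)] K_ideal[OF assms(1)] assms(4,5) by blast
  moreover have "br y x \<in> K i" using K_ideal[OF assms(2)] K_ideal[OF assms(1)] assms(4,5) by blast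
  then have "br x y \<in> K i" using br_antisym[OF lie, of x y] K_ideal(1)[OF assms(1)] by (simp add: subspace_neg)
  ultimately show ?thesis using K_inter_K[OF assms(1-3)] by blast
qed

lemma B_simple_K_other: assumes "i \<in> {1..r}" "j \<in> {1..r}" "i \<noteq> j" "x \<in> K i" "y \<in> K j"
  shows "B x y = 0"
proof -
  have "B x w = 0" if hw: "w \<in> {br a b |a b. a \<in> K j \<and> b \<in> K j}" for w
  proof -
    obtain a b where w: "w = br a b" "a \<in> K j" "b \<in> K j" using hw by blast
    have "br a x = 0" using br_simple_K_other[OF assms(2,1) _ w(2) assms(4)] assms(3) by simp
    then show ?thesis using B_invariant[of a x b] w by (simp add: bilinear_lzero[OF B_bilinear])
  qed
  then show ?thesis using real_vector.linear_eq_0_on_span[OF B_linear] K_perfect[OF assms(2)] assms(5) by blast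
qed

lemma k_derived_centre_decomp: assumes x: "x \<in> k" shows "\<exists>a\<in>d. \<exists>c\<in>z. x = a + c"
proof -
  obtain w where w: "w \<in> d" "x - w \<in> k" "\<forall>y\<in>d. B (x - w) y = 0"
    using B_orth_proj_k[OF d_subspace d_sub_k x] by blast
  let ?c = "x - w"
  have "br ?c y = 0" if y: "y \<in> k" for y
  proof -
    have cd: "br ?c y \<in> d" using br_k_k_in_d[OF w(2) y] .
    have "B (br ?c y) v = 0" if v: "v \<in> d" for v
    proof -
      have "br y v \<in> d" using br_k_k_in_d[OF y] v d_sub_k by blast
      then have "B ?c (br y v) = 0" using w(3) by blast
      moreover have "B (br ?c y) v = - B (br y ?c) v" using br_antisym[OF lie, of ?c y]
        by (simp add: bilinear_lneg[OF B_bilinear])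
      ultimately show ?thesis using B_invariant[of y ?c v] by simp
    qed
    then have "B (br ?c y) (br ?c y) = 0" using cd by blast
    then show ?thesis using B_k_eq_0 cd d_sub_k by blast
  qed
  then have "?c \<in> z" unfolding centre_def using w(2) by blast
  then show ?thesis using w(1) by (intro bexI[of _ w] bexI[of _ ?c]) auto
qed

lemma J_sub_d: "J \<subseteq> d"
proof (rule span_minimal)
  show "(\<Union>i\<in>{1..r}. K i) \<subseteq> d" using K_ideal(2) by blast
qed (rule d_subspace)
lemma br_d_J: assumes a: "a \<in> d" and y: "y \<in> J" shows "br a y \<in> J"
  using y
proof (induction rule: span_induct)
  case base
  show ?case unfolding subspace_def
    by (auto simp: br_addr[OF lie] br_scaler[OF lie] br_0r[OF lie] span_add span_scale span_zero)
next
  case (step x)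
  then obtain i where "i \<in> {1..r}" "x \<in> K i" by blast
  then show ?case using K_ideal(3) a by (auto intro!: span_base)
qed

lemma B_perp_ideal:
  assumes W: "ideal_of br d W"
  shows "ideal_of br d {x\<in>d. \<forall>y\<in>W. B x y = 0}"
  unfolding ideal_of_def
proof (intro conjI ballI)
  show "subspace {x\<in>d. \<forall>y\<in>W. B x y = 0}" using d_subspace unfolding subspace_def
    by (auto simp: bilinear_ladd[OF B_bilinear] bilinear_lmul[OF B_bilinear] bilinear_lzero[OF B_bilinear])
  show "{x\<in>d. \<forall>y\<in>W. B x y = 0} \<subseteq> d" by auto
  fix a m assume a: "a \<in> d" and m: "m \<in> {x\<in>d. \<forall>y\<in>W. B x y = 0}"
  have "br a m \<in> d" using br_k_k_in_d a m d_sub_k by blast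
  moreover have "B (br a m) y = 0" if "y \<in> W" for y
    using B_invariant[of a m y] W that a m unfolding ideal_of_def by auto
  ultimately show "br a m \<in> {x\<in>d. \<forall>y\<in>W. B x y = 0}" by blast
qed

lemma B_perp_decomp:
  assumes I: "ideal_of br d I" and v: "v \<in> d"
  shows "\<exists>w\<in>I. v - w \<in> d \<and> (\<forall>y\<in>I. B (v - w) y = 0)"
proof -
  have I_sub: "subspace I" "I \<subseteq> k" using I d_sub_k unfolding ideal_of_def by auto
  obtain w where w: "w \<in> I" "\<forall>y\<in>I. B (v - w) y = 0"
    using B_orth_proj_k[OF I_sub] d_sub_k v by blast
  moreover have "v - w \<in> d" using v w(1) I d_subspace unfolding ideal_of_def by (auto simp: subspace_diff)
  ultimately show ?thesis by blast
qed

lemma br_ideal_B_perp: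
  assumes I: "ideal_of br d I" and a: "a \<in> I" and b: "b \<in> d" "\<forall>y\<in>I. B b y = 0"
  shows "br a b = 0"
proof -
  have "br b a \<in> I" using I a b unfolding ideal_of_def by blast
  then have in_I: "br a b \<in> I"
    using br_antisym[OF lie, of a b] I unfolding ideal_of_def by (simp add: subspace_neg)
  have "B (br a b) (br a b) = - B b (br a (br a b))" by (rule B_invariant)
  also have "br a (br a b) \<in> I" using I a in_I d_sub_k unfolding ideal_of_def by blast
  then have "B b (br a (br a b)) = 0" using b by blast
  finally have "B (br a b) (br a b) = 0" by simp
  then show ?thesis using B_k_eq_0 in_I I d_sub_k unfolding ideal_of_def by blast
qed

lemma abelian_ideal_trivial:
  assumes I: "ideal_of br d I" and abelian: "\<forall>x\<in>I. \<forall>y\<in>I. br x y = 0"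
  shows "I = {0}"
proof -
  have "m = 0" if m: "m \<in> I" for m
  proof -
    have mk: "m \<in> k" using m I d_sub_k unfolding ideal_of_def by blast
    have "br m y = 0" if y: "y \<in> k" for y
    proof -
      obtain a c where ac: "a \<in> d" "c \<in> z" "y = a + c" using k_derived_centre_decomp[OF y] by blast
      obtain w where w: "w \<in> I" "a - w \<in> d" "\<forall>y\<in>I. B (a - w) y = 0"
        using B_perp_decomp[OF I ac(1)] by blast
      have "br m (a - w) = 0" using br_ideal_B_perp[OF I m w(2,3)] .
      moreover have "br m w = 0" using abelian m w(1) by blast
      moreover have "br m c = 0" using centre_k(3)[OF ac(2) mk] br_antisym[OF lie, of m c] by simp
      ultimately show ?thesis using ac(3) by (simp add: br_diffr[OF lie] br_addr[OF lie])
    qed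
    then have "m \<in> z" unfolding centre_def using mk by blast
    then have "B m m = 0" using B_centre_derived m I unfolding ideal_of_def by blast
    then show ?thesis using B_k_eq_0 mk by blast
  qed
  then show ?thesis using I subspace_0 unfolding ideal_of_def by blast
qed

lemma ideal_of_ideal:
  assumes I: "ideal_of br d I" and L: "ideal_of br I L"
  shows "ideal_of br d L"
  unfolding ideal_of_def
proof (intro conjI ballI)
  show "subspace L" "L \<subseteq> d" using I L unfolding ideal_of_def by auto
  fix v l assume v: "v \<in> d" and l: "l \<in> L"
  obtain w where w: "w \<in> I" "v - w \<in> d" "\<forall>y\<in>I. B (v - w) y = 0"
    using B_perp_decomp[OF I v] by blast
  have "br w l \<in> L" using L w l unfolding ideal_of_def by blast
  moreover have "br l (v - w) = 0" using br_ideal_B_perp[OF I _ w(2,3)] l L unfolding ideal_of_def by blast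
  then have "br (v - w) l = 0" using br_antisym[OF lie, of "v - w" l] by simp
  ultimately show "br v l \<in> L" by (simp add: br_diffl[OF lie])
qed

lemma minimal_ideal_simple:
  assumes I: "ideal_of br d I" "I \<noteq> {0}"
    and minimal: "\<And>L. ideal_of br d L \<Longrightarrow> L \<subseteq> I \<Longrightarrow> L \<noteq> {0} \<Longrightarrow> L = I"
  shows "simple_sub br I"
  unfolding simple_sub_def
proof (intro conjI allI impI)
  show "\<exists>x\<in>I. \<exists>y\<in>I. br x y \<noteq> 0" using abelian_ideal_trivial[OF I(1)] I(2) by blast
  fix L assume "ideal_of br I L"
  then show "L = {0} \<or> L = I"
    using minimal[OF ideal_of_ideal[OF I(1)]] unfolding ideal_of_def by blast
qed

text \<open>Otherwise the B-orthogonal complement of J in d is a nonzero ideal; a nonzero ideal of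
  least dimension inside it is simple, hence one of the K i, which is not orthogonal to J.\<close>

lemma d_sub_J: "d \<subseteq> J"
proof (rule ccontr)
  assume "\<not> d \<subseteq> J"
  then obtain x where x: "x \<in> d" "x \<notin> J" by blast
  have J_ideal: "ideal_of br d J" unfolding ideal_of_def using J_sub_d br_d_J by auto
  define M where "M = {x\<in>d. \<forall>y\<in>J. B x y = 0}"
  obtain w where "w \<in> J" "x - w \<in> M" using B_perp_decomp[OF J_ideal x(1)] unfolding M_def by blast
  with x have "M \<noteq> {0}" by auto
  define P where "P I \<longleftrightarrow> ideal_of br d I \<and> I \<subseteq> M \<and> I \<noteq> {0}" for I
  have "ideal_of br d M" unfolding M_def by (rule B_perp_ideal[OF J_ideal])
  with \<open>M \<noteq> {0}\<close> have "P M" unfolding P_def by simp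
  then obtain I where PI: "P I" and I_min: "\<And>I'. P I' \<Longrightarrow> dim I \<le> dim I'"
    using ex_has_least_nat[of P M dim] by blast
  have I: "ideal_of br d I" "I \<subseteq> M" "I \<noteq> {0}" using PI unfolding P_def by auto
  have "simple_sub br I"
  proof (rule minimal_ideal_simple[OF I(1,3)])
    fix L assume L: "ideal_of br d L" "L \<subseteq> I" "L \<noteq> {0}"
    then have "dim I \<le> dim L" using I(2) by (intro I_min) (auto simp: P_def)
    then show "L = I" using subspace_dim_equal[of L I] L I(1) unfolding ideal_of_def by blast
  qed
  then obtain i where "i \<in> {1..r}" "I = K i" using all_simple_ideals I(1) by blast
  then have "B v v = 0" if "v \<in> I" for v
    using that I(2) span_base[of v "\<Union>i\<in>{1..r}. K i"] unfolding M_def by blast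
  then have "I \<subseteq> {0}" using B_k_eq_0 I(1) d_sub_k unfolding ideal_of_def by blast
  then show False using I(1,3) subspace_0 unfolding ideal_of_def by blast
qed

lemma s_cases: "s = 0 \<or> s = 1" using s_def by (cases "z = {0}") simp_all
lemma s_1_centre: "s = 1 \<Longrightarrow> z \<noteq> {0}" using s_def by (cases "z = {0}") simp_all
lemma s_0_centre: "s = 0 \<Longrightarrow> z = {0}" using s_def by (cases "z = {0}") simp_all

lemma K_index_cases: "i \<in> N \<Longrightarrow> i \<in> {1..r} \<or> (s = 1 \<and> i = r + 1)"
  using s_cases by (cases "s = 0") auto

lemma sum_I0: "(\<Sum>i\<in>I0. h i) = h 0 + (\<Sum>i\<in>N. h i)"
  by (simp add: sum.atLeast_Suc_atMost)

lemma K_centre: "s = 1 \<Longrightarrow> K (r+1) = z" using centre_K by simp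

lemma K_subspace_k: "i \<in> N \<Longrightarrow> subspace (K i)" "i \<in> N \<Longrightarrow> K i \<subseteq> k"
  using K_index_cases[of i] K_ideal(1) K_sub_k K_centre centre_k by auto

lemma br_K_closed: assumes "i \<in> N" "x \<in> K i" "y \<in> K i" shows "br x y \<in> K i"
proof -
  consider "i \<in> {1..r}" | "s = 1" "i = r + 1" using K_index_cases[OF assms(1)] by blast
  then show ?thesis
  proof cases
    case 1
    then have "x \<in> d" using K_ideal(2) assms(2) by blast
    then show ?thesis using K_ideal(3)[OF 1] assms(3) by blast
  next
    case 2
    then have "K i = z" using K_centre by simp
    then have "br x y = 0" using centre_k(2,3) assms(2,3) by blast
    then show ?thesis using \<open>K i = z\<close> centre_k(1) by (simp add: subspace_0)
  qed
qed

lemma br_K_other: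
  assumes "i \<in> N" "j \<in> N" "i \<noteq> j" "x \<in> K i" "y \<in> K j"
  shows "br x y = 0"
proof -
  consider "i \<in> {1..r}" "j \<in> {1..r}" | "s = 1" "i = r + 1" | "s = 1" "j = r + 1"
    using K_index_cases[OF assms(1)] K_index_cases[OF assms(2)] by blast
  then show ?thesis
  proof cases
    case 1 then show ?thesis using br_simple_K_other assms by blast
  next
    case 2 then show ?thesis using K_centre centre_k(3) assms K_subspace_k by blast
  next
    case 3
    then have "br y x = 0" using K_centre centre_k(3) assms K_subspace_k by blast
    then show ?thesis using br_antisym[OF lie, of x y] by simp
  qed
qed

lemma B_K_other:
  assumes "i \<in> N" "j \<in> N" "i \<noteq> j" "x \<in> K i" "y \<in> K j"
  shows "B x y = 0"
proof -
  consider "i \<in> {1..r}" "j \<in> {1..r}" | "s = 1" "i = r + 1" "j \<in> {1..r}" | "s = 1" "j = r + 1" "i \<in> {1..r}"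
    using K_index_cases[OF assms(1)] K_index_cases[OF assms(2)] assms(3) by blast
  then show ?thesis
  proof cases
    case 1 then show ?thesis using B_simple_K_other assms by blast
  next
    case 2 then show ?thesis using K_centre B_centre_derived K_ideal(2) assms by blast
  next
    case 3
    then have "y \<in> z" "x \<in> d" using K_centre K_ideal(2) assms(4,5) by auto
    then show ?thesis using B_centre_derived B_sym by metis
  qed
qed

lemma k_span_K: "k \<subseteq> span (\<Union>i\<in>N. K i)"
proof
  fix x assume x: "x \<in> k"
  obtain a c where ac: "a \<in> d" "c \<in> z" "x = a + c" using k_derived_centre_decomp[OF x] by blast
  have "(\<Union>i\<in>{1..r}. K i) \<subseteq> (\<Union>i\<in>N. K i)" by (intro UN_mono) auto
  then have "J \<subseteq> span (\<Union>i\<in>N. K i)" by (rule span_mono)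
  then have "a \<in> span (\<Union>i\<in>N. K i)" using d_sub_J ac(1) by blast
  moreover have "c \<in> span (\<Union>i\<in>N. K i)"
  proof (cases "s = 0")
    case True then show ?thesis using s_0_centre ac(2) by (simp add: span_zero)
  next
    case False
    then have "s = 1" using s_cases by simp
    then have "c \<in> (\<Union>i\<in>N. K i)" using K_centre ac(2) by (intro UN_I[of "r+1"]) auto
    then show ?thesis by (rule span_base)
  qed
  ultimately show "x \<in> span (\<Union>i\<in>N. K i)" using ac(3) by (simp add: span_add)
qed

definition block :: "nat \<Rightarrow> 'a set" where "block i = (if i = 0 then p else K i)"

lemma block_subspace: "i \<in> I0 \<Longrightarrow> subspace (block i)"
  unfolding block_def using p_subspace K_subspace_k by auto

lemma block_K: "i \<in> N \<Longrightarrow> block i = K i" unfolding block_def by auto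
lemma block_0: "block 0 = p" unfolding block_def by auto

lemma Q_block_orth:
  assumes "i \<in> I0" "j \<in> I0" "i \<noteq> j" "x \<in> block i" "y \<in> block j"
  shows "Q x y = 0"
proof -
  consider "i = 0" "j \<in> N" | "j = 0" "i \<in> N" | "i \<in> N" "j \<in> N" using assms by force
  then show ?thesis
  proof cases
    case 1
    then have "x \<in> p" "y \<in> k" using assms(4,5) K_subspace_k(2)[of j] unfolding block_def by auto
    then show ?thesis using Q_pk by blast
  next
    case 2
    then have "y \<in> p" "x \<in> k" using assms(4,5) K_subspace_k(2)[of i] unfolding block_def by auto
    then show ?thesis using Q_kp by blast
  next
    case 3
    then have "x \<in> K i" "y \<in> K j" "i \<noteq> 0" "j \<noteq> 0" using assms(4,5) unfolding block_def by auto
    moreover have "x \<in> k" "y \<in> k" using K_subspace_k(2)[OF 3(1)] K_subspace_k(2)[OF 3(2)] calculation by blast+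
    ultimately show ?thesis using Q_kk B_K_other[OF 3 assms(3)] by simp
  qed
qed

lemma block_decomp: "\<exists>u. (\<forall>i\<in>I0. u i \<in> block i) \<and> x = (\<Sum>i\<in>I0. u i)"
proof -
  obtain a v where av: "a \<in> k" "v \<in> p" "x = a + v" using k_p_decomp by blast
  have "a \<in> span (\<Union>i\<in>N. K i)" using k_span_K av(1) by blast
  then obtain u where u: "\<forall>i\<in>N. u i \<in> K i" "a = (\<Sum>i\<in>N. u i)"
    using span_UN_sum[of N K a] K_subspace_k(1) by blast
  define u' where "u' i = (if i = 0 then v else u i)" for i
  have "(\<Sum>i\<in>I0. u' i) = u' 0 + (\<Sum>i\<in>N. u' i)"
    by (rule sum_I0)
  also have "(\<Sum>i\<in>N. u' i) = (\<Sum>i\<in>N. u i)" unfolding u'_def by (intro sum.cong) auto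
  also have "u' 0 = v" unfolding u'_def by simp
  finally have xs: "x = (\<Sum>i\<in>I0. u' i)" using av(3) u(2) by (simp add: add.commute)
  have "u' i \<in> block i" if "i \<in> I0" for i
  proof (cases "i = 0")
    case True then show ?thesis using av(2) unfolding u'_def block_def by simp
  next
    case False
    then have "i \<in> N" using that by auto
    then show ?thesis using u(1) False unfolding u'_def block_def by simp
  qed
  then show ?thesis using xs by blast
qed

definition F :: "nat \<Rightarrow> 'a set" where
  "F i = (SOME E. orthonormal_basis_of Q (block i) E \<and> card E = dim (block i))"

lemma F_basis: assumes "i \<in> I0" shows "orthonormal_basis_of Q (block i) (F i)" "card (F i) = dim (block i)"
proof -
  have "\<exists>E. orthonormal_basis_of Q (block i) E \<and> card E = dim (block i)"
    using orthonormal_basis_of_exists[OF Q_bilinear Q_sym _ block_subspace[OF assms]] Q_pos by blast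
  then have "orthonormal_basis_of Q (block i) (F i) \<and> card (F i) = dim (block i)" unfolding F_def by (rule someI_ex)
  then show "orthonormal_basis_of Q (block i) (F i)" "card (F i) = dim (block i)" by auto
qed

lemma finite_F: "i \<in> I0 \<Longrightarrow> finite (F i)" using F_basis(1) unfolding orthonormal_basis_of_def by auto
lemma F_sub_block: "i \<in> I0 \<Longrightarrow> F i \<subseteq> block i" using F_basis(1) unfolding orthonormal_basis_of_def by auto
lemma Q_F_orthonormal: "i \<in> I0 \<Longrightarrow> a \<in> F i \<Longrightarrow> b \<in> F i \<Longrightarrow> Q a b = (if a = b then 1 else 0)"
  using F_basis(1) unfolding orthonormal_basis_of_def orthonormal_wrt_def by auto
lemma F_expansion: "i \<in> I0 \<Longrightarrow> x \<in> block i \<Longrightarrow> x = (\<Sum>e\<in>F i. Q x e *\<^sub>R e)"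
  using F_basis(1) unfolding orthonormal_basis_of_def by auto

lemma Q_F_other_block: "i \<in> I0 \<Longrightarrow> j \<in> I0 \<Longrightarrow> i \<noteq> j \<Longrightarrow> x \<in> block j \<Longrightarrow> f \<in> F i \<Longrightarrow> Q x f = 0"
  using Q_block_orth F_sub_block by blast

lemma Q_expansion: "x = (\<Sum>i\<in>I0. \<Sum>f\<in>F i. Q x f *\<^sub>R f)"
proof -
  obtain u where u: "\<forall>i\<in>I0. u i \<in> block i" "x = (\<Sum>i\<in>I0. u i)" using block_decomp by blast
  have Qx: "Q x f = Q (u i) f" if i: "i \<in> I0" and f: "f \<in> F i" for i f
  proof -
    have "Q x f = (\<Sum>j\<in>I0. Q (u j) f)" using u(2) by (simp add: bilinear_sum_left[OF Q_bilinear])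
    also have "\<dots> = Q (u i) f + (\<Sum>j\<in>I0 - {i}. Q (u j) f)" using i by (simp add: sum.remove)
    also have "(\<Sum>j\<in>I0 - {i}. Q (u j) f) = 0"
    proof (intro sum.neutral ballI)
      fix j assume "j \<in> I0 - {i}"
      then show "Q (u j) f = 0" using Q_F_other_block[OF i, of j "u j" f] u(1) f by auto
    qed
    finally show ?thesis by simp
  qed
  have e: "u i = (\<Sum>f\<in>F i. Q (u i) f *\<^sub>R f)" if "i \<in> I0" for i
    using F_expansion that u(1) by blast
  have "x = (\<Sum>i\<in>I0. u i)" by (rule u(2))
  also have "\<dots> = (\<Sum>i\<in>I0. \<Sum>f\<in>F i. Q (u i) f *\<^sub>R f)" by (rule sum.cong[OF refl e])
  finally have "x = (\<Sum>i\<in>I0. \<Sum>f\<in>F i. Q (u i) f *\<^sub>R f)" .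
  also have "\<dots> = (\<Sum>i\<in>I0. \<Sum>f\<in>F i. Q x f *\<^sub>R f)" using Qx by simp
  finally show ?thesis .
qed

lemma Q_F_F: "i \<in> I0 \<Longrightarrow> j \<in> I0 \<Longrightarrow> a \<in> F i \<Longrightarrow> b \<in> F j \<Longrightarrow>
   Q a b = (if i = j \<and> a = b then 1 else 0)"
proof -
  assume h: "i \<in> I0" "j \<in> I0" "a \<in> F i" "b \<in> F j"
  show ?thesis
  proof (cases "i = j")
    case True then show ?thesis using Q_F_orthonormal h by simp
  next
    case False
    have "a \<in> block i" using F_sub_block h by blast
    then have "Q a b = 0" using Q_F_other_block[OF h(2,1) _ _ h(4)] False by auto
    then show ?thesis using False by simp
  qed
qed

lemma restr_form_block: assumes "i \<in> I0"
  shows "restr_form Q (block i) x y = (\<Sum>f\<in>F i. Q x f * Q y f)"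
proof -
  have "fproj Q (block i) v = (\<Sum>e\<in>F i. Q v e *\<^sub>R e)" for v
    by (rule fproj_orthonormal_basis[OF Q_bilinear Q_sym _ block_subspace[OF assms] F_basis(1)[OF assms]])
       (simp add: Q_pos)
  then have "restr_form Q (block i) x y = Q (\<Sum>e\<in>F i. Q x e *\<^sub>R e) (\<Sum>e\<in>F i. Q y e *\<^sub>R e)"
    unfolding restr_form_def by simp
  also have "\<dots> = (\<Sum>e\<in>F i. Q y e * Q (\<Sum>e\<in>F i. Q x e *\<^sub>R e) e)"
    by (simp add: bilinear_sum_right[OF Q_bilinear] bilinear_rmul[OF Q_bilinear])
  also have "\<dots> = (\<Sum>e\<in>F i. Q x e * Q y e)"
  proof (intro sum.cong refl)
    fix e assume e: "e \<in> F i"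
    have o: "orthonormal_wrt Q (F i)" unfolding orthonormal_wrt_def using Q_F_orthonormal[OF assms] by blast
    show "Q y e * Q (\<Sum>e\<in>F i. Q x e *\<^sub>R e) e = Q x e * Q y e"
      using orthonormal_wrt_coeff[OF Q_bilinear o finite_F[OF assms] e] by simp
  qed
  finally show ?thesis .
qed

lemma finite_Sigma_F: "finite (Sigma I0 F)"
  by (auto simp: finite_F)

lemma sum_Sigma_F: "(\<Sum>j\<in>Sigma I0 F. h j) = (\<Sum>i\<in>I0. \<Sum>f\<in>F i. h (i, f))"
  by (subst sum.Sigma) (auto simp: finite_F)

lemma trace_lin_F:
  assumes "linear T"
  shows "trace_lin T = (\<Sum>i\<in>I0. \<Sum>f\<in>F i. Q (T f) f)"
proof -
  have "trace_lin T = (\<Sum>j\<in>Sigma I0 F. Q (T (snd j)) (snd j))"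
  proof (rule trace_lin_coordinates[where c="\<lambda>j x. Q x (snd j)" and v=snd, OF _ _ _ assms])
    show "finite (Sigma I0 F)" by (rule finite_Sigma_F)
    show "x = (\<Sum>j\<in>Sigma I0 F. Q x (snd j) *\<^sub>R snd j)" for x
      unfolding sum_Sigma_F snd_conv by (rule Q_expansion)
  qed (rule Q_linear_left)
  then show ?thesis by (simp add: sum_Sigma_F)
qed

lemma F_0_p: "f \<in> F 0 \<Longrightarrow> f \<in> p" using F_sub_block[of 0] block_0 by auto
lemma F_K: "i \<in> N \<Longrightarrow> f \<in> F i \<Longrightarrow> f \<in> K i" using F_sub_block[of i] block_K[of i] by auto
lemma F_k: "i \<in> N \<Longrightarrow> f \<in> F i \<Longrightarrow> f \<in> k" using F_K K_subspace_k(2) by blast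

lemma card_F_K: "i \<in> N \<Longrightarrow> card (F i) = dim (K i)" using F_basis(2)[of i] block_K[of i] by auto
lemma card_F_0: "card (F 0) = dim p" using F_basis(2)[of 0] block_0 by auto

lemma Q_F_unit: "i \<in> I0 \<Longrightarrow> f \<in> F i \<Longrightarrow> Q f f = 1" using Q_F_orthonormal by simp
lemma B_F_p_unit: "f \<in> F 0 \<Longrightarrow> B f f = 1" using Q_pp[of f f] F_0_p Q_F_unit[of 0 f] by simp
lemma B_F_K_unit: "i \<in> N \<Longrightarrow> f \<in> F i \<Longrightarrow> B f f = -1" using Q_kk[of f f] F_k Q_F_unit[of i f] by auto

lemma Q_parseval:
  assumes m: "m \<in> I0" and w: "w \<in> block m"
  shows "Q w w = (\<Sum>h\<in>F m. (Q w h)^2)"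
  using arg_cong[OF F_expansion[OF m w], of "Q w"]
  by (simp add: bilinear_sum_right[OF Q_bilinear] bilinear_rmul[OF Q_bilinear] power2_eq_square)

lemma sum_ad2_F_p:
  assumes x: "x \<in> k"
  shows "(\<Sum>f\<in>F 0. Q (br x (br x f)) f) = - (\<Sum>y\<in>F 0. B (br x y) (br x y))"
proof -
  have "Q (br x (br x f)) f = - B (br x f) (br x f)" if f: "f \<in> F 0" for f
  proof -
    have fp: "f \<in> p" using F_0_p f .
    have "br x (br x f) \<in> p" using br_k_p[OF x br_k_p[OF x fp]] .
    then have "Q (br x (br x f)) f = B (br x (br x f)) f" using Q_pp fp by blast
    also have "\<dots> = - B (br x f) (br x f)"
      using B_invariant[of x "br x f" f] B_sym[of "br x f" "br x (br x f)"] by simp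
    finally show ?thesis .
  qed
  then show ?thesis by (simp add: sum_negf)
qed

end

section \<open>The naturally reductive metric\<close>

lemma sum_scaled_nested_swap:
  fixes X :: "'x \<Rightarrow> 'l \<Rightarrow> 'h \<Rightarrow> real"
  shows "(\<Sum>a\<in>A. \<Sum>l\<in>L. c l * (\<Sum>h\<in>H l. X a l h)) = (\<Sum>l\<in>L. c l * (\<Sum>h\<in>H l. \<Sum>a\<in>A. X a l h))"
proof -
  have "(\<Sum>a\<in>A. \<Sum>l\<in>L. c l * (\<Sum>h\<in>H l. X a l h)) = (\<Sum>a\<in>A. \<Sum>l\<in>L. \<Sum>h\<in>H l. c l * X a l h)"
    by (simp add: sum_distrib_left)
  also have "\<dots> = (\<Sum>l\<in>L. \<Sum>a\<in>A. \<Sum>h\<in>H l. c l * X a l h)" by (rule sum.swap)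
  also have "\<dots> = (\<Sum>l\<in>L. \<Sum>h\<in>H l. \<Sum>a\<in>A. c l * X a l h)" by (rule sum.cong[OF refl], rule sum.swap)
  also have "\<dots> = (\<Sum>l\<in>L. c l * (\<Sum>h\<in>H l. \<Sum>a\<in>A. X a l h))" by (simp add: sum_distrib_left)
  finally show ?thesis .
qed

lemma scalar_curvature_arith:
  fixes a d \<kappa> :: "nat \<Rightarrow> real" and b n :: real
  assumes b: "b \<noteq> 0" and a: "\<And>i. i \<in> A \<Longrightarrow> a i \<noteq> 0"
  shows "-1/4 * (\<Sum>i\<in>A. a i * (d i * (1 - \<kappa> i)) / (b * b) + 2 * (d i * (1 - \<kappa> i)) / a i
            + d i * \<kappa> i / a i) - 1/2 * (n / b + (\<Sum>i\<in>A. - d i / a i))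
       = - (1/4) * (\<Sum>i\<in>A. a i / b^2 * d i * (1 - \<kappa> i)) - n / (2 * b)
         + (1/4) * (\<Sum>i\<in>A. d i * \<kappa> i / a i)"
proof -
  have "-1/4 * (\<Sum>i\<in>A. a i * (d i * (1 - \<kappa> i)) / (b * b) + 2 * (d i * (1 - \<kappa> i)) / a i
            + d i * \<kappa> i / a i) - 1/2 * (\<Sum>i\<in>A. - d i / a i)
      = (\<Sum>i\<in>A. -1/4 * (a i * (d i * (1 - \<kappa> i)) / (b * b) + 2 * (d i * (1 - \<kappa> i)) / a i
            + d i * \<kappa> i / a i) - 1/2 * (- d i / a i))"
    by (simp only: sum_distrib_left sum_subtractf)
  also have "\<dots> = (\<Sum>i\<in>A. - (1/4) * (a i / b^2 * d i * (1 - \<kappa> i)) + (1/4) * (d i * \<kappa> i / a i))"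
    using a b by (intro sum.cong refl) (simp add: field_simps power2_eq_square)
  also have "\<dots> = - (1/4) * (\<Sum>i\<in>A. a i / b^2 * d i * (1 - \<kappa> i)) + (1/4) * (\<Sum>i\<in>A. d i * \<kappa> i / a i)"
    by (simp only: sum.distrib sum_distrib_left)
  finally show ?thesis by (simp add: distrib_left)
qed

locale natural_metric = cartan_ideals br k K r s for br :: "'a::euclidean_space \<Rightarrow> 'a \<Rightarrow> 'a" and k K r s +
  fixes kappa alpha :: "nat \<Rightarrow> real" and beta :: real
  assumes simple: "simple_sub br UNIV"
    and kappa: "\<forall>i\<in>{1..r+s}. \<forall>x\<in>K i. \<forall>y\<in>K i. killing_on br (K i) x y = kappa i * killing br x y"
    and beta_pos: "beta > 0"
    and alpha_pos: "\<forall>i\<in>{1..r+s}. alpha i > 0"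
begin

definition scale :: "nat \<Rightarrow> real" where "scale i = (if i = 0 then beta else alpha i)"
lemma scale_pos: "i \<in> I0 \<Longrightarrow> scale i > 0" unfolding scale_def using beta_pos alpha_pos by auto

definition metric :: "'a \<Rightarrow> 'a \<Rightarrow> real" where
  "metric x y = beta * restr_form Q p x y + (\<Sum>i=1..r+s. alpha i * restr_form Q (K i) x y)"

lemma metric_eq: "metric x y = (\<Sum>i\<in>I0. scale i * (\<Sum>f\<in>F i. Q x f * Q y f))"
proof -
  have "(\<Sum>i\<in>I0. scale i * (\<Sum>f\<in>F i. Q x f * Q y f)) =
     scale 0 * (\<Sum>f\<in>F 0. Q x f * Q y f) + (\<Sum>i\<in>N. scale i * (\<Sum>f\<in>F i. Q x f * Q y f))"
    by (rule sum_I0)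
  also have "scale 0 * (\<Sum>f\<in>F 0. Q x f * Q y f) = beta * restr_form Q p x y"
    using restr_form_block[of 0 x y] unfolding scale_def block_def by simp
  also have "(\<Sum>i\<in>N. scale i * (\<Sum>f\<in>F i. Q x f * Q y f)) = (\<Sum>i\<in>N. alpha i * restr_form Q (K i) x y)"
  proof (intro sum.cong refl)
    fix i assume i: "i \<in> N"
    then have "i \<in> I0" "i \<noteq> 0" by auto
    then show "scale i * (\<Sum>f\<in>F i. Q x f * Q y f) = alpha i * restr_form Q (K i) x y"
      using restr_form_block[of i x y] by (simp add: scale_def block_def)
  qed
  finally show ?thesis unfolding metric_def by simp
qed

lemma metric_sym: "metric x y = metric y x" unfolding metric_eq by (simp add: mult.commute)

lemma metric_bilinear: "bilinear metric"
proof -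
  have l: "linear (\<lambda>x. metric x y)" for y
  proof (rule linearI)
    fix a b
    show "metric (a + b) y = metric a y + metric b y" unfolding metric_eq
      by (simp add: bilinear_ladd[OF Q_bilinear] distrib_right sum.distrib distrib_left)
  next
    fix c a
    show "metric (c *\<^sub>R a) y = c *\<^sub>R metric a y" unfolding metric_eq
      by (simp add: bilinear_lmul[OF Q_bilinear] sum_distrib_left mult.assoc mult.left_commute)
  qed
  have r: "linear (\<lambda>y. metric x y)" for x
  proof -
    have "(\<lambda>y. metric x y) = (\<lambda>y. metric y x)" by (rule ext) (rule metric_sym)
    then show ?thesis using l[of x] by simp
  qed
  show ?thesis unfolding bilinear_def using l r by blast
qed

lemma metric_square: "metric x x = (\<Sum>i\<in>I0. scale i * (\<Sum>f\<in>F i. (Q x f)^2))"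
  unfolding metric_eq by (simp add: power2_eq_square)

lemma metric_pos: "x \<noteq> 0 \<Longrightarrow> metric x x > 0"
proof -
  assume x: "x \<noteq> 0"
  have nn: "\<forall>i\<in>I0. scale i * (\<Sum>f\<in>F i. (Q x f)^2) \<ge> 0"
  proof
    fix i assume "i \<in> I0"
    then show "scale i * (\<Sum>f\<in>F i. (Q x f)^2) \<ge> 0" using scale_pos[of i] by (intro mult_nonneg_nonneg sum_nonneg) auto
  qed
  have "\<exists>i\<in>I0. \<exists>f\<in>F i. Q x f \<noteq> 0"
  proof (rule ccontr)
    assume "\<not> ?thesis"
    then have "(\<Sum>i\<in>I0. \<Sum>f\<in>F i. Q x f *\<^sub>R f) = 0" by simp
    then show False using Q_expansion[of x] x by simp
  qed
  then obtain i f where i: "i \<in> I0" "f \<in> F i" "Q x f \<noteq> 0" by blast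
  have "(\<Sum>f\<in>F i. (Q x f)^2) \<ge> (Q x f)^2"
    using i finite_F[of i] by (intro member_le_sum) auto
  moreover have "(Q x f)^2 > 0" using i(3) by simp
  ultimately have "(\<Sum>f\<in>F i. (Q x f)^2) > 0" by linarith
  then have "scale i * (\<Sum>f\<in>F i. (Q x f)^2) > 0" using scale_pos[OF i(1)] by simp
  then have "(\<Sum>i\<in>I0. scale i * (\<Sum>f\<in>F i. (Q x f)^2)) > 0"
    using i(1) nn by (intro sum_pos2[where i=i]) auto
  then show ?thesis unfolding metric_square .
qed

lemma metric_F: assumes i: "i \<in> I0" and f: "f \<in> F i" shows "metric x f = scale i * Q x f"
proof -
  have inner: "(\<Sum>h\<in>F j. Q x h * Q f h) = (if j = i then Q x f else 0)" if j: "j \<in> I0" for j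
  proof (cases "j = i")
    case True
    have "(\<Sum>h\<in>F j. Q x h * Q f h) = (\<Sum>h\<in>F j. if h = f then Q x h else 0)"
      by (intro sum.cong refl) (simp add: Q_F_F[OF i j f] True)
    also have "\<dots> = Q x f" using f finite_F[OF i] True by simp
    finally show ?thesis using True by simp
  next
    case False
    have "(\<Sum>h\<in>F j. Q x h * Q f h) = (\<Sum>h\<in>F j. 0)"
      using False by (intro sum.cong refl) (auto simp: Q_F_F[OF i j f])
    then show ?thesis using False by simp
  qed
  have "metric x f = (\<Sum>j\<in>I0. scale j * (if j = i then Q x f else 0))"
    unfolding metric_eq by (intro sum.cong refl) (simp add: inner)
  also have "\<dots> = (\<Sum>j\<in>I0. if j = i then scale i * Q x f else 0)"
    by (intro sum.cong refl) simp
  also have "\<dots> = scale i * Q x f" using i by simp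
  finally show ?thesis .
qed

lemma metric_block:
  assumes m: "m \<in> I0" and w: "w \<in> block m"
  shows "metric w w = scale m * Q w w"
proof -
  have "metric w w = (\<Sum>l\<in>I0. if l = m then scale m * (\<Sum>h\<in>F m. (Q w h)^2) else 0)"
    unfolding metric_square
  proof (rule sum.cong[OF refl])
    fix l assume l: "l \<in> I0"
    show "scale l * (\<Sum>h\<in>F l. (Q w h)^2) = (if l = m then scale m * (\<Sum>h\<in>F m. (Q w h)^2) else 0)"
      using Q_F_other_block[OF l m _ w] by auto
  qed
  also have "\<dots> = scale m * Q w w" using m Q_parseval[OF m w] by simp
  finally show ?thesis .
qed

lemma metric_k:
  assumes w: "w \<in> k"
  shows "metric w w = (\<Sum>l\<in>N. alpha l * (\<Sum>h\<in>F l. (Q w h)^2))"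
proof -
  have "metric w w = scale 0 * (\<Sum>h\<in>F 0. (Q w h)^2) + (\<Sum>l\<in>N. scale l * (\<Sum>h\<in>F l. (Q w h)^2))"
    unfolding metric_square by (rule sum_I0)
  also have "(\<Sum>h\<in>F 0. (Q w h)^2) = 0" using Q_kp[OF w] F_0_p by simp
  also have "(\<Sum>l\<in>N. scale l * (\<Sum>h\<in>F l. (Q w h)^2)) = (\<Sum>l\<in>N. alpha l * (\<Sum>h\<in>F l. (Q w h)^2))"
    by (intro sum.cong refl) (auto simp: scale_def)
  finally show ?thesis by simp
qed

lemma trace_ad2_K:
  assumes l: "l \<in> N" and x: "x \<in> K l"
  shows "(\<Sum>f\<in>F l. Q (br x (br x f)) f) = kappa l * B x x"
proof -
  have "killing_on br (K l) x x = trace_on (K l) (\<lambda>z. br x (br x z))" unfolding killing_on_def ..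
  also have "\<dots> = (\<Sum>f\<in>F l. Q (br x (br x f)) f)"
  proof (rule trace_on_coordinates[where c="\<lambda>e y. Q y e"])
    show "subspace (K l)" using K_subspace_k(1)[OF l] .
    show "finite (F l)" using l by (simp add: finite_F)
    show "F l \<subseteq> K l" using F_K[OF l] by blast
    show "y = (\<Sum>e\<in>F l. Q y e *\<^sub>R e)" if "y \<in> K l" for y
      using F_expansion[of l y] block_K[OF l] l that by simp
    show "linear_on (K l) (\<lambda>y. Q y e)" for e by (rule linear_imp_linear_on[OF Q_linear_left])
    show "linear (\<lambda>z. br x (br x z))" by (rule linear_br_br[OF lie])
    show "br x (br x y) \<in> K l" if "y \<in> K l" for y using br_K_closed[OF l x] that by blast
  qed
  finally show ?thesis using kappa l x by simp
qed

lemma sum_ad2_F_K: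
  assumes l: "l \<in> N" and x: "x \<in> K l"
  shows "(\<Sum>i\<in>N. \<Sum>f\<in>F i. Q (br x (br x f)) f) = kappa l * B x x"
proof -
  have "(\<Sum>f\<in>F i. Q (br x (br x f)) f) = 0" if i: "i \<in> N - {l}" for i
  proof -
    have "br x f = 0" if "f \<in> F i" for f
      using br_K_other[OF l _ _ x F_K[OF _ that]] i by blast
    then show ?thesis by (simp add: br_0r[OF lie] bilinear_lzero[OF Q_bilinear])
  qed
  then have "(\<Sum>i\<in>N. \<Sum>f\<in>F i. Q (br x (br x f)) f) = (\<Sum>f\<in>F l. Q (br x (br x f)) f)"
    using l by (subst sum.remove[of _ l]) auto
  then show ?thesis using trace_ad2_K[OF l x] by simp
qed

text \<open>Computing B x x as a trace in the Q-orthonormal basis splits it into the part of ad x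
  acting on p and the part acting on K l, the latter being kappa l * B x x.\<close>

lemma sum_B_br_p:
  assumes l: "l \<in> N" and x: "x \<in> K l"
  shows "(\<Sum>y\<in>F 0. B (br x y) (br x y)) = - (1 - kappa l) * B x x"
proof -
  have "B x x = (\<Sum>i\<in>I0. \<Sum>f\<in>F i. Q (br x (br x f)) f)"
    unfolding killing_def by (rule trace_lin_F[OF linear_br_br[OF lie]])
  also have "\<dots> = (\<Sum>f\<in>F 0. Q (br x (br x f)) f) + (\<Sum>i\<in>N. \<Sum>f\<in>F i. Q (br x (br x f)) f)"
    by (rule sum_I0)
  finally have "B x x = - (\<Sum>y\<in>F 0. B (br x y) (br x y)) + kappa l * B x x"
    using sum_ad2_F_p[of x] sum_ad2_F_K[OF l x] x K_subspace_k(2)[OF l] by auto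
  then show ?thesis by (simp add: algebra_simps)
qed

lemma kappa_centre_eq_0:
  assumes s1: "s = 1"
  shows "kappa (r+1) = 0"
proof -
  have l: "r + 1 \<in> N" using s1 by simp
  obtain x where x: "x \<in> z" "x \<noteq> 0"
    using s_1_centre[OF s1] subspace_0[OF centre_k(1)] by blast
  have "br x f = 0" if "f \<in> F (r+1)" for f using centre_k(3) x F_k[OF l that] by blast
  then have "(\<Sum>f\<in>F (r+1). Q (br x (br x f)) f) = 0" by (simp add: br_0r[OF lie] bilinear_lzero[OF Q_bilinear])
  then have "kappa (r+1) * B x x = 0" using trace_ad2_K[OF l] x K_centre[OF s1] by simp
  moreover have "B x x < 0" using B_neg_k x centre_k(2) by blast
  ultimately show ?thesis by simp
qed

lemma sum_kappa_centre:
  "(\<Sum>i\<in>N. real (dim (K i)) * kappa i / alpha i) = (\<Sum>i=1..r. real (dim (K i)) * kappa i / alpha i)"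
  using s_cases kappa_centre_eq_0 by auto

definition bracket_norm :: "nat \<Rightarrow> nat \<Rightarrow> real" where
  "bracket_norm i' i = (\<Sum>f'\<in>F i'. \<Sum>f\<in>F i. metric (br f' f) (br f' f))"

lemma metric_br_K_K:
  assumes i: "i \<in> N" and f': "f' \<in> K i" and f: "f \<in> K i"
  shows "metric (br f' f) (br f' f) = - alpha i * Q (br f' (br f' f)) f"
proof -
  have fk: "f \<in> k" using f K_subspace_k(2)[OF i] by blast
  have wK: "br f' f \<in> K i" using br_K_closed[OF i f' f] .
  have wk: "br f' f \<in> k" using wK K_subspace_k(2)[OF i] by blast
  have vk: "br f' (br f' f) \<in> k" using br_K_closed[OF i f' wK] K_subspace_k(2)[OF i] by blast
  have "metric (br f' f) (br f' f) = alpha i * Q (br f' f) (br f' f)"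
    using metric_block[of i] wK block_K[OF i] i by (simp add: scale_def)
  also have "Q (br f' f) (br f' f) = - B (br f' f) (br f' f)" using Q_kk[OF wk wk] .
  also have "B (br f' f) (br f' f) = - B f (br f' (br f' f))" using B_invariant[of f' f "br f' f"] .
  also have "B f (br f' (br f' f)) = - Q (br f' (br f' f)) f" using Q_kk[OF fk vk] Q_sym by simp
  finally show ?thesis by simp
qed

lemma bracket_norm_diag:
  assumes i: "i \<in> N"
  shows "bracket_norm i i = alpha i * real (dim (K i)) * kappa i"
proof -
  have "(\<Sum>f\<in>F i. metric (br f' f) (br f' f)) = alpha i * kappa i" if f': "f' \<in> F i" for f'
  proof -
    have "(\<Sum>f\<in>F i. metric (br f' f) (br f' f)) = - alpha i * (\<Sum>f\<in>F i. Q (br f' (br f' f)) f)"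
      using metric_br_K_K[OF i F_K[OF i f'] F_K[OF i]] by (simp add: sum_distrib_left)
    also have "\<dots> = - alpha i * (kappa i * B f' f')" using trace_ad2_K[OF i F_K[OF i f']] by simp
    finally show ?thesis using B_F_K_unit[OF i f'] by simp
  qed
  then show ?thesis unfolding bracket_norm_def using card_F_K[OF i] by simp
qed

lemma bracket_norm_other:
  assumes i: "i \<in> N" and j: "j \<in> N" and ij: "i \<noteq> j"
  shows "bracket_norm i j = 0"
proof -
  have "metric (br f' f) (br f' f) = 0" if "f' \<in> F i" "f \<in> F j" for f' f
    using br_K_other[OF i j ij F_K[OF i that(1)] F_K[OF j that(2)]]
    by (simp add: bilinear_lzero[OF metric_bilinear])
  then show ?thesis unfolding bracket_norm_def by simp
qed

lemma sum_B_br_K_p: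
  assumes i: "i \<in> N"
  shows "(\<Sum>f\<in>F i. \<Sum>y\<in>F 0. B (br f y) (br f y)) = real (dim (K i)) * (1 - kappa i)"
proof -
  have "(\<Sum>y\<in>F 0. B (br f y) (br f y)) = 1 - kappa i" if f: "f \<in> F i" for f
    using sum_B_br_p[OF i F_K[OF i f]] B_F_K_unit[OF i f] by simp
  then show ?thesis using card_F_K[OF i] by simp
qed

lemma metric_br_p:
  assumes "w \<in> p"
  shows "metric w w = beta * B w w"
  using metric_block[of 0 w] Q_pp[OF assms assms] assms block_0 by (simp add: scale_def)

lemma bracket_norm_K_p:
  assumes i: "i \<in> N"
  shows "bracket_norm i 0 = beta * real (dim (K i)) * (1 - kappa i)"
proof -
  have "bracket_norm i 0 = beta * (\<Sum>f\<in>F i. \<Sum>y\<in>F 0. B (br f y) (br f y))"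
    unfolding bracket_norm_def sum_distrib_left
    using metric_br_p br_k_p F_k[OF i] F_0_p by (intro sum.cong refl) auto
  then show ?thesis using sum_B_br_K_p[OF i] by simp
qed

lemma bracket_norm_p_K:
  assumes i: "i \<in> N"
  shows "bracket_norm 0 i = beta * real (dim (K i)) * (1 - kappa i)"
proof -
  have "metric (br y f) (br y f) = metric (br f y) (br f y)" for y f
    using br_antisym[OF lie, of y f]
    by (simp add: bilinear_lneg[OF metric_bilinear] bilinear_rneg[OF metric_bilinear])
  then have "bracket_norm 0 i = bracket_norm i 0"
    unfolding bracket_norm_def by (simp add: sum.swap[of _ "F 0"])
  then show ?thesis using bracket_norm_K_p[OF i] by simp
qed

lemma sum_metric_br_p_p:
  assumes y: "y \<in> F 0"
  shows "(\<Sum>z\<in>F 0. metric (br y z) (br y z)) = (\<Sum>l\<in>N. alpha l * (\<Sum>h\<in>F l. B (br h y) (br h y)))"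
proof -
  have "(\<Sum>z\<in>F 0. metric (br y z) (br y z)) = (\<Sum>z\<in>F 0. \<Sum>l\<in>N. alpha l * (\<Sum>h\<in>F l. (Q (br y h) z)^2))"
  proof (rule sum.cong[OF refl])
    fix z assume z: "z \<in> F 0"
    have "metric (br y z) (br y z) = (\<Sum>l\<in>N. alpha l * (\<Sum>h\<in>F l. (Q (br y z) h)^2))"
      using metric_k[OF br_p_p[OF F_0_p[OF y] F_0_p[OF z]]] .
    then show "metric (br y z) (br y z) = (\<Sum>l\<in>N. alpha l * (\<Sum>h\<in>F l. (Q (br y h) z)^2))"
      using Q_br_p_p_swap[OF F_0_p[OF y] F_0_p[OF z] F_k] by simp
  qed
  also have "\<dots> = (\<Sum>l\<in>N. alpha l * (\<Sum>h\<in>F l. \<Sum>z\<in>F 0. (Q (br y h) z)^2))"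
    by (rule sum_scaled_nested_swap)
  also have "\<dots> = (\<Sum>l\<in>N. alpha l * (\<Sum>h\<in>F l. B (br h y) (br h y)))"
  proof (intro sum.cong refl arg_cong2[where f="(*)"])
    fix l h assume l: "l \<in> N" and h: "h \<in> F l"
    have u: "br y h \<in> p" using br_p_k[OF F_0_p[OF y] F_k[OF l h]] .
    have "(\<Sum>z\<in>F 0. (Q (br y h) z)^2) = B (br y h) (br y h)"
      using Q_parseval[of 0 "br y h"] u block_0 Q_pp[OF u u] by simp
    also have "\<dots> = B (br h y) (br h y)"
      using br_antisym[OF lie, of y h] by (simp add: bilinear_lneg[OF B_bilinear] bilinear_rneg[OF B_bilinear])
    finally show "(\<Sum>z\<in>F 0. (Q (br y h) z)^2) = B (br h y) (br h y)" .
  qed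
  finally show ?thesis .
qed

lemma bracket_norm_p_p: "bracket_norm 0 0 = (\<Sum>l\<in>N. alpha l * (real (dim (K l)) * (1 - kappa l)))"
proof -
  have "bracket_norm 0 0 = (\<Sum>y\<in>F 0. \<Sum>l\<in>N. alpha l * (\<Sum>h\<in>F l. B (br h y) (br h y)))"
    unfolding bracket_norm_def using sum_metric_br_p_p by (rule sum.cong[OF refl])
  also have "\<dots> = (\<Sum>l\<in>N. alpha l * (\<Sum>h\<in>F l. \<Sum>y\<in>F 0. B (br h y) (br h y)))"
    by (rule sum_scaled_nested_swap)
  also have "\<dots> = (\<Sum>l\<in>N. alpha l * (real (dim (K l)) * (1 - kappa l)))"
    by (intro sum.cong refl arg_cong2[where f="(*)"]) (simp add: sum_B_br_K_p)
  finally show ?thesis .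
qed

definition frame :: "nat \<times> 'a \<Rightarrow> 'a" where "frame j = (1 / sqrt (scale (fst j))) *\<^sub>R snd j"

lemma frame_eq: "frame (i, f) = (1 / sqrt (scale i)) *\<^sub>R f" unfolding frame_def by simp

lemma inv_sqrt_scale_sq: "i \<in> I0 \<Longrightarrow> (1 / sqrt (scale i)) * (1 / sqrt (scale i)) = 1 / scale i"
  using scale_pos[of i] by simp

lemma metric_frame_expansion: "x = (\<Sum>j\<in>Sigma I0 F. metric x (frame j) *\<^sub>R frame j)"
proof -
  have "metric x (frame (i, f)) *\<^sub>R frame (i, f) = Q x f *\<^sub>R f" if i: "i \<in> I0" and f: "f \<in> F i" for i f
  proof -
    have "metric x (frame (i, f)) *\<^sub>R frame (i, f) = ((1 / sqrt (scale i)) * (1 / sqrt (scale i)) * scale i * Q x f) *\<^sub>R f"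
      unfolding frame_eq by (simp add: bilinear_rmul[OF metric_bilinear] metric_F[OF i f] algebra_simps)
    then show ?thesis using inv_sqrt_scale_sq[OF i] scale_pos[OF i] by simp
  qed
  then show ?thesis unfolding sum_Sigma_F using Q_expansion[of x] by simp
qed

lemma metric_orthonormal_basis_exists: "\<exists>E. orthonormal_basis_for metric E"
proof -
  obtain E where E: "orthonormal_basis_of metric UNIV E" "card E = dim (UNIV :: 'a set)"
    using orthonormal_basis_of_exists[OF metric_bilinear metric_sym _ subspace_UNIV] metric_pos by blast
  then show ?thesis
    unfolding orthonormal_basis_for_def orthonormal_basis_of_def orthonormal_wrt_def by (intro exI[of _ E]) auto
qed

lemma orthonormal_frame_metric:
  assumes E: "orthonormal_basis_for metric E"
  shows "orthonormal_frame br metric E"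
proof
  show fin: "finite E" using E unfolding orthonormal_basis_for_def by simp
  show o: "orthonormal_wrt metric E" using E unfolding orthonormal_basis_for_def orthonormal_wrt_def by simp
  have "dim (UNIV :: 'a set) \<le> card E" using E unfolding orthonormal_basis_for_def by simp
  then have "UNIV \<subseteq> span E"
    using card_ge_dim_independent[OF subset_UNIV orthonormal_wrt_independent[OF metric_bilinear o fin]] by simp
  then show "x = (\<Sum>e\<in>E. metric x e *\<^sub>R e)" for x
    using orthonormal_wrt_expansion[OF metric_bilinear o fin] by blast
qed (use lie metric_bilinear metric_sym in auto)

lemma sum_B_orthonormal:
  assumes E: "orthonormal_basis_for metric E"
  shows "(\<Sum>e\<in>E. B e e) = real (dim p) / beta + (\<Sum>i\<in>N. - real (dim (K i)) / alpha i)"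
proof -
  interpret orthonormal_frame br metric E by (rule orthonormal_frame_metric[OF E])
  have "(\<Sum>e\<in>E. B e e) = (\<Sum>j\<in>Sigma I0 F. B (frame j) (frame j))"
    by (rule diagonal_sum_frame_invariant[OF finite_E finite_Sigma_F metric_sym expansion
          metric_frame_expansion B_bilinear])
  also have "\<dots> = (\<Sum>i\<in>I0. (1 / scale i) * (\<Sum>f\<in>F i. B f f))"
    unfolding sum_Sigma_F frame_eq using inv_sqrt_scale_sq
    by (simp add: bilinear_lmul[OF B_bilinear] bilinear_rmul[OF B_bilinear] mult.assoc[symmetric]
        sum_distrib_left)
  also have "\<dots> = (1 / beta) * (\<Sum>f\<in>F 0. B f f) + (\<Sum>i\<in>N. (1 / alpha i) * (\<Sum>f\<in>F i. B f f))"
    by (simp add: sum_I0 scale_def)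
  also have "\<dots> = real (dim p) / beta + (\<Sum>i\<in>N. - real (dim (K i)) / alpha i)"
    using B_F_p_unit card_F_0 B_F_K_unit card_F_K by simp
  finally show ?thesis .
qed

definition scaled_bracket_norm :: "nat \<Rightarrow> nat \<Rightarrow> real" where
  "scaled_bracket_norm i' i = (1 / scale i') * (1 / scale i) * bracket_norm i' i"

lemma bilinear_metric_br: "bilinear (\<lambda>x y. metric (br a x) (br a y))"
  unfolding bilinear_def
  by (auto intro!: linearI simp: br_addr[OF lie] br_scaler[OF lie] bilinear_ladd[OF metric_bilinear]
      bilinear_radd[OF metric_bilinear] bilinear_lmul[OF metric_bilinear] bilinear_rmul[OF metric_bilinear])

lemma bilinear_metric_br_frame: "bilinear (\<lambda>x y. \<Sum>j\<in>Sigma I0 F. metric (br x (frame j)) (br y (frame j)))"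
  unfolding bilinear_def
  by (auto intro!: linearI simp: br_addl[OF lie] br_scalel[OF lie] bilinear_ladd[OF metric_bilinear]
      bilinear_radd[OF metric_bilinear] bilinear_lmul[OF metric_bilinear] bilinear_rmul[OF metric_bilinear]
      sum.distrib sum_distrib_left)

lemma sum_metric_br_orthonormal:
  assumes E: "orthonormal_basis_for metric E"
  shows "(\<Sum>a\<in>E. \<Sum>b\<in>E. metric (br a b) (br a b)) = (\<Sum>i'\<in>I0. \<Sum>i\<in>I0. scaled_bracket_norm i' i)"
proof -
  interpret orthonormal_frame br metric E by (rule orthonormal_frame_metric[OF E])
  note frame_change = diagonal_sum_frame_invariant[OF finite_E finite_Sigma_F metric_sym expansion
      metric_frame_expansion]
  have "(\<Sum>a\<in>E. \<Sum>b\<in>E. metric (br a b) (br a b))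
      = (\<Sum>a\<in>E. \<Sum>j\<in>Sigma I0 F. metric (br a (frame j)) (br a (frame j)))"
    by (intro sum.cong refl frame_change[OF bilinear_metric_br])
  also have "\<dots> = (\<Sum>j'\<in>Sigma I0 F. \<Sum>j\<in>Sigma I0 F. metric (br (frame j') (frame j)) (br (frame j') (frame j)))"
    by (rule frame_change[OF bilinear_metric_br_frame])
  also have "\<dots> = (\<Sum>i'\<in>I0. \<Sum>f'\<in>F i'. \<Sum>i\<in>I0. \<Sum>f\<in>F i.
                  (1 / scale i') * (1 / scale i) * metric (br f' f) (br f' f))"
    unfolding sum_Sigma_F
  proof (intro sum.cong refl)
    fix i' f' i f assume i': "i' \<in> I0" and i: "i \<in> I0"
    show "metric (br (frame (i', f')) (frame (i, f))) (br (frame (i', f')) (frame (i, f))) =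
          (1 / scale i') * (1 / scale i) * metric (br f' f) (br f' f)"
      unfolding frame_eq using inv_sqrt_scale_sq[OF i] inv_sqrt_scale_sq[OF i']
      by (simp add: br_scalel[OF lie] br_scaler[OF lie] bilinear_lmul[OF metric_bilinear]
          bilinear_rmul[OF metric_bilinear] mult.assoc[symmetric]) (simp add: algebra_simps)
  qed
  also have "\<dots> = (\<Sum>i'\<in>I0. \<Sum>i\<in>I0. \<Sum>f'\<in>F i'. \<Sum>f\<in>F i.
                  (1 / scale i') * (1 / scale i) * metric (br f' f) (br f' f))"
    by (intro sum.cong refl sum.swap)
  also have "\<dots> = (\<Sum>i'\<in>I0. \<Sum>i\<in>I0. scaled_bracket_norm i' i)"
    unfolding scaled_bracket_norm_def bracket_norm_def by (simp add: sum_distrib_left)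
  finally show ?thesis .
qed

lemma sum_scaled_bracket_norm_row:
  assumes i': "i' \<in> N"
  shows "(\<Sum>i\<in>N. scaled_bracket_norm i' i) = scaled_bracket_norm i' i'"
proof -
  have "(\<Sum>i\<in>N - {i'}. scaled_bracket_norm i' i) = 0"
    by (intro sum.neutral) (auto simp: scaled_bracket_norm_def bracket_norm_other[OF i'])
  then show ?thesis using i' by (simp add: sum.remove)
qed

lemma sum_scaled_bracket_norm: "(\<Sum>i'\<in>I0. \<Sum>i\<in>I0. scaled_bracket_norm i' i) = (\<Sum>i\<in>N.
     alpha i * (real (dim (K i)) * (1 - kappa i)) / (beta * beta)
     + 2 * (real (dim (K i)) * (1 - kappa i)) / alpha i
     + real (dim (K i)) * kappa i / alpha i)"
proof -
  have scale: "scale 0 = beta" "\<And>i. i \<in> N \<Longrightarrow> scale i = alpha i" unfolding scale_def by auto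
  have "(\<Sum>i'\<in>N. \<Sum>i\<in>N. scaled_bracket_norm i' i) = (\<Sum>i\<in>N. scaled_bracket_norm i i)"
    by (rule sum.cong[OF refl]) (rule sum_scaled_bracket_norm_row)
  then have "(\<Sum>i'\<in>I0. \<Sum>i\<in>I0. scaled_bracket_norm i' i)
      = scaled_bracket_norm 0 0 + (\<Sum>i\<in>N. scaled_bracket_norm 0 i + scaled_bracket_norm i 0 + scaled_bracket_norm i i)"
    by (simp only: sum_I0 sum.distrib add.assoc)
  also have "scaled_bracket_norm 0 0 = (\<Sum>i\<in>N. alpha i * (real (dim (K i)) * (1 - kappa i)) / (beta * beta))"
    unfolding scaled_bracket_norm_def bracket_norm_p_p scale by (simp add: sum_distrib_left sum_divide_distrib)
  also have "(\<Sum>i\<in>N. scaled_bracket_norm 0 i + scaled_bracket_norm i 0 + scaled_bracket_norm i i)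
      = (\<Sum>i\<in>N. 2 * (real (dim (K i)) * (1 - kappa i)) / alpha i + real (dim (K i)) * kappa i / alpha i)"
    using beta_pos alpha_pos
    by (intro sum.cong refl) (simp add: scaled_bracket_norm_def scale bracket_norm_p_K bracket_norm_K_p
        bracket_norm_diag field_simps)
  finally show ?thesis by (simp add: sum.distrib add.assoc)
qed

theorem scalar_curvature_metric:
  "scalar_curvature metric br =
     - (1/4) * (\<Sum>i=1..r+s. alpha i / beta^2 * real (dim (K i)) * (1 - kappa i))
     - real (dim p) / (2 * beta)
     + (1/4) * (\<Sum>i=1..r. real (dim (K i)) * kappa i / alpha i)"
proof -
  define E where "E = (SOME E. orthonormal_basis_for metric E)"
  have E: "orthonormal_basis_for metric E"
    unfolding E_def using metric_orthonormal_basis_exists by (rule someI_ex)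
  interpret orthonormal_frame br metric E by (rule orthonormal_frame_metric[OF E])
  have "scalar_curvature metric br
      = -1/4 * (\<Sum>a\<in>E. \<Sum>b\<in>E. metric (br a b) (br a b)) - 1/2 * (\<Sum>a\<in>E. B a a)"
    unfolding scalar_curvature_def E_def[symmetric] Let_def
    by (rule scalar_curvature_sum[OF trace_ad_eq_0[OF lie simple]])
  also have "\<dots> = - (1/4) * (\<Sum>i\<in>N. alpha i / beta^2 * real (dim (K i)) * (1 - kappa i))
      - real (dim p) / (2 * beta) + (1/4) * (\<Sum>i\<in>N. real (dim (K i)) * kappa i / alpha i)"
    unfolding sum_metric_br_orthonormal[OF E] sum_scaled_bracket_norm sum_B_orthonormal[OF E]
    using beta_pos alpha_pos by (intro scalar_curvature_arith) (simp, fastforce)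
  finally show ?thesis unfolding sum_kappa_centre .
qed

end

theorem corollary3p8:
  fixes br :: "'a::euclidean_space \<Rightarrow> 'a \<Rightarrow> 'a"
    and k :: "'a set" and K :: "nat \<Rightarrow> 'a set" and r s :: nat
    and kappa alpha :: "nat \<Rightarrow> real" and beta :: real
  assumes lie: "lie_bracket br"
    and simple: "simple_sub br UNIV"
    and noncompact: "\<exists>x. killing br x x > 0"
    and cartan: "cartan_k br k"
    and simple_ideals: "\<forall>i\<in>{1..r}. ideal_of br (derived br k) (K i) \<and> simple_sub br (K i)"
    and all_simple_ideals: "\<forall>I. ideal_of br (derived br k) I \<and> simple_sub br I \<longrightarrow> (\<exists>i\<in>{1..r}. I = K i)"
    and distinct: "inj_on K {1..r}"
    and s_def: "s = (if centre br k = {0} then 0 else 1)"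
    and centre_K: "s = 1 \<longrightarrow> K (r + 1) = centre br k"
    and kappa: "\<forall>i\<in>{1..r+s}. \<forall>x\<in>K i. \<forall>y\<in>K i. killing_on br (K i) x y = kappa i * killing br x y"
    and beta_pos: "beta > 0"
    and alpha_pos: "\<forall>i\<in>{1..r+s}. alpha i > 0"
  shows "scalar_curvature
           (\<lambda>x y. beta * restr_form (Qform br k) (perp_k br k) x y
                 + (\<Sum>i=1..r+s. alpha i * restr_form (Qform br k) (K i) x y)) br
         = - (1/4) * (\<Sum>i=1..r+s. alpha i / beta^2 * real (dim (K i)) * (1 - kappa i))
           - real (dim (perp_k br k)) / (2 * beta)
           + (1/4) * (\<Sum>i=1..r. real (dim (K i)) * kappa i / alpha i)"
proof -
  interpret natural_metric br k K r s kappa alpha beta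
    by unfold_locales
      (use lie cartan simple_ideals all_simple_ideals distinct s_def centre_K simple kappa beta_pos
        alpha_pos in auto)
  have "(\<lambda>x y. beta * restr_form (Qform br k) (perp_k br k) x y
                 + (\<Sum>i=1..r+s. alpha i * restr_form (Qform br k) (K i) x y)) = metric"
    by (intro ext) (simp add: metric_def)
  then show ?thesis using scalar_curvature_metric by simp
qed

end
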